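(* Let $f:(\mathbb{C}^3,0)\to(\mathbb{C}^3,0)$ be a half corner $$f(x,y,z)=(x+z^c(x+P),\; y+z^{c+1}(\beta+Q),\; z+z^{c+2}R),$$ with $c\in\mathbb{N}^*$, $\beta\in\mathbb{C}$, $P\in\mathfrak{m}^2$, $Q\in\mathfrak{m}$, $R$ holomorphic. Its singular directions are: - $[1:0:0]$ (exceptional); - $[0:1:0]$ (exceptional); - when $f$ is non-simple, $[0:y_0:1]$ for all $y_0\in\mathbb{C}$ (non-exceptional and degenerate). Let $\tilde f$ be the lift of $f$ to the blow-up of the origin. Then: - $\tilde f$ is a simple corner at $[1:0:0]$; - $\tilde f$ is a spinning corner at $[0:1:0]$; - if $f$ is non-simple, $\tilde f$ is a half corner at $[0:y_0:1]$ for every $y_0\in\mathbb{C}$.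
   Context: $\mathfrak{m}$ is the maximal ideal at $0$. The half corner is simple if $\beta\neq0$ and non-simple if $\beta=0$. Singular directions are taken with respect to $\ell=z^c$: $v$ is singular if $H_\ell(v)=\lambda v$, where $H_\ell$ is the lowest-degree homogeneous part of $\ell^{-1}(f-\mathrm{id})$, and degenerate if $\lambda=0$. A direction is exceptional if it is tangent to $\{z=0\}$. The germ types are defined up to local coordinate change: - Half corner: of the displayed form. - Simple corner: $(x+x^ay^bz^c\,x(\lambda+P),\; y+x^ay^bz^c\,y(\mu+Q),\; z+x^ay^bz^c\,R)$, with $a,b\in\mathbb{N}^*$, $c\in\mathbb{N}$, $\lambda\ne0$, $\mu\notin\lambda\mathbb{Q}_{>0}$, $P,Q,R\in\mathfrak{m}$, and $z\mid R$ if $c>0$. - Spinning corner: $(x+y^bz^c(x+P),\; y+y^{b+1}z^cQ,\; z+y^bz^{c+1}R)$, with $b,c\in\mathbb{N}^*$, $P\in\mathfrak{m}^2$, $Q,R\in\mathfrak{m}$. *)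

theory Defs
  imports "HOL-Analysis.Analysis"
begin

text \<open>Points of C^3 are triples (x,y,z). Germs at 0 are represented by total functions,
  only their behaviour near 0 matters.\<close>

type_synonym c3 = "complex \<times> complex \<times> complex"

definition csc :: "complex \<Rightarrow> c3 \<Rightarrow> c3" where
  "csc a v = (a * fst v, a * fst (snd v), a * snd (snd v))"

definition holo3 :: "(c3 \<Rightarrow> complex) \<Rightarrow> c3 set \<Rightarrow> bool" where
  "holo3 g U \<longleftrightarrow> open U \<and>
     (\<forall>p\<in>U. \<exists>L. (g has_derivative L) (at p) \<and> (\<forall>a v. L (csc a v) = a * L v))"

definition hgerm :: "(c3 \<Rightarrow> complex) \<Rightarrow> bool" where
  "hgerm g \<longleftrightarrow> (\<exists>U. 0 \<in> U \<and> holo3 g U)"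

definition hgerm_map :: "(c3 \<Rightarrow> c3) \<Rightarrow> bool" where
  "hgerm_map G \<longleftrightarrow> hgerm (\<lambda>p. fst (G p)) \<and> hgerm (\<lambda>p. fst (snd (G p)))
      \<and> hgerm (\<lambda>p. snd (snd (G p)))"

definition in_m :: "(c3 \<Rightarrow> complex) \<Rightarrow> bool" where
  "in_m g \<longleftrightarrow> hgerm g \<and> g 0 = 0"

definition in_m2 :: "(c3 \<Rightarrow> complex) \<Rightarrow> bool" where
  "in_m2 g \<longleftrightarrow> (\<exists>(n::nat) a b. (\<forall>i<n. in_m (a i) \<and> in_m (b i)) \<and>
      eventually (\<lambda>p. g p = (\<Sum>i<n. a i p * b i p)) (nhds 0))"

definition loc_biholo :: "(c3 \<Rightarrow> c3) \<Rightarrow> (c3 \<Rightarrow> c3) \<Rightarrow> bool" where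
  "loc_biholo \<phi> \<psi> \<longleftrightarrow> hgerm_map \<phi> \<and> hgerm_map \<psi> \<and> \<phi> 0 = 0 \<and> \<psi> 0 = 0 \<and>
     eventually (\<lambda>p. \<psi> (\<phi> p) = p) (nhds 0) \<and> eventually (\<lambda>q. \<phi> (\<psi> q) = q) (nhds 0)"

definition conj_to :: "(c3 \<Rightarrow> c3) \<Rightarrow> (c3 \<Rightarrow> c3) \<Rightarrow> bool" where
  "conj_to g h \<longleftrightarrow> (\<exists>\<phi> \<psi>. loc_biholo \<phi> \<psi> \<and> eventually (\<lambda>p. g p = \<psi> (h (\<phi> p))) (nhds 0))"

definition half_corner_form ::
  "nat \<Rightarrow> complex \<Rightarrow> (c3 \<Rightarrow> complex) \<Rightarrow> (c3 \<Rightarrow> complex) \<Rightarrow> (c3 \<Rightarrow> complex) \<Rightarrow> (c3 \<Rightarrow> c3) \<Rightarrow> bool" where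
  "half_corner_form c \<beta> P Q R h \<longleftrightarrow> 0 < c \<and> in_m2 P \<and> in_m Q \<and> hgerm R \<and>
     eventually (\<lambda>(x, y, z). h (x, y, z) =
        (x + z ^ c * (x + P (x, y, z)),
         y + z ^ (c + 1) * (\<beta> + Q (x, y, z)),
         z + z ^ (c + 2) * R (x, y, z))) (nhds 0)"

definition simple_corner_form ::
  "nat \<Rightarrow> nat \<Rightarrow> nat \<Rightarrow> complex \<Rightarrow> complex \<Rightarrow> (c3 \<Rightarrow> complex) \<Rightarrow> (c3 \<Rightarrow> complex) \<Rightarrow> (c3 \<Rightarrow> complex)
     \<Rightarrow> (c3 \<Rightarrow> c3) \<Rightarrow> bool" where
  "simple_corner_form a b c lam mu P Q R h \<longleftrightarrow> 0 < a \<and> 0 < b \<and> lam \<noteq> 0 \<and>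
     \<not> (\<exists>q::rat. q > 0 \<and> mu = lam * of_rat q) \<and> in_m P \<and> in_m Q \<and> in_m R \<and>
     (0 < c \<longrightarrow> (\<exists>R'. hgerm R' \<and> eventually (\<lambda>(x, y, z). R (x, y, z) = z * R' (x, y, z)) (nhds 0))) \<and>
     eventually (\<lambda>(x, y, z). h (x, y, z) =
        (x + x ^ a * y ^ b * z ^ c * (x * (lam + P (x, y, z))),
         y + x ^ a * y ^ b * z ^ c * (y * (mu + Q (x, y, z))),
         z + x ^ a * y ^ b * z ^ c * R (x, y, z))) (nhds 0)"

definition spinning_corner_form ::
  "nat \<Rightarrow> nat \<Rightarrow> (c3 \<Rightarrow> complex) \<Rightarrow> (c3 \<Rightarrow> complex) \<Rightarrow> (c3 \<Rightarrow> complex) \<Rightarrow> (c3 \<Rightarrow> c3) \<Rightarrow> bool" where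
  "spinning_corner_form b c P Q R h \<longleftrightarrow> 0 < b \<and> 0 < c \<and> in_m2 P \<and> in_m Q \<and> in_m R \<and>
     eventually (\<lambda>(x, y, z). h (x, y, z) =
        (x + y ^ b * z ^ c * (x + P (x, y, z)),
         y + y ^ (b + 1) * z ^ c * Q (x, y, z),
         z + y ^ b * z ^ (c + 1) * R (x, y, z))) (nhds 0)"

definition is_half_corner :: "(c3 \<Rightarrow> c3) \<Rightarrow> bool" where
  "is_half_corner g \<longleftrightarrow> (\<exists>c \<beta> P Q R h. half_corner_form c \<beta> P Q R h \<and> conj_to g h)"

definition is_simple_corner :: "(c3 \<Rightarrow> c3) \<Rightarrow> bool" where
  "is_simple_corner g \<longleftrightarrow> (\<exists>a b c lam mu P Q R h. simple_corner_form a b c lam mu P Q R h \<and> conj_to g h)"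

definition is_spinning_corner :: "(c3 \<Rightarrow> c3) \<Rightarrow> bool" where
  "is_spinning_corner g \<longleftrightarrow> (\<exists>b c P Q R h. spinning_corner_form b c P Q R h \<and> conj_to g h)"

text \<open>Homogeneous part of degree k of a holomorphic germ: k-th Taylor coefficient of t \<mapsto> g(t v).\<close>
definition hom_part :: "nat \<Rightarrow> (c3 \<Rightarrow> complex) \<Rightarrow> c3 \<Rightarrow> complex" where
  "hom_part k g v = (deriv ^^ k) (\<lambda>t. g (csc t v)) 0 / of_nat (fact k)"

definition hom_part_map :: "nat \<Rightarrow> (c3 \<Rightarrow> c3) \<Rightarrow> c3 \<Rightarrow> c3" where
  "hom_part_map k G v = (hom_part k (\<lambda>p. fst (G p)) v, hom_part k (\<lambda>p. fst (snd (G p))) v,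
                         hom_part k (\<lambda>p. snd (snd (G p))) v)"

definition lowest_hom :: "(c3 \<Rightarrow> c3) \<Rightarrow> c3 \<Rightarrow> c3" where
  "lowest_hom G = hom_part_map (LEAST k. \<exists>w. hom_part_map k G w \<noteq> 0) G"

text \<open>Singular directions with respect to ell = z^c: G = ell^{-1}(f - id), H_ell = lowest_hom G,
  v singular with eigenvalue lam if H_ell v = lam v.\<close>
definition singular_dir :: "(c3 \<Rightarrow> c3) \<Rightarrow> nat \<Rightarrow> c3 \<Rightarrow> complex \<Rightarrow> bool" where
  "singular_dir f c v lam \<longleftrightarrow> v \<noteq> 0 \<and>
     (\<exists>G. hgerm_map G \<and> eventually (\<lambda>p. f p - p = csc ((snd (snd p)) ^ c) (G p)) (nhds 0)
          \<and> lowest_hom G v = csc lam v)"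

definition degenerate_dir :: "(c3 \<Rightarrow> c3) \<Rightarrow> nat \<Rightarrow> c3 \<Rightarrow> bool" where
  "degenerate_dir f c v \<longleftrightarrow> singular_dir f c v 0"

definition exceptional_dir :: "c3 \<Rightarrow> bool" where
  "exceptional_dir v \<longleftrightarrow> v \<noteq> 0 \<and> snd (snd v) = 0"

text \<open>The projective point [w], as the set of its nonzero representatives.\<close>
definition cline :: "c3 \<Rightarrow> c3 set" where
  "cline w = {csc t w | t. t \<noteq> 0}"

text \<open>Lift of f to the blow-up, expressed in standard affine charts centred at the given point.\<close>
definition lift_chart1 :: "(c3 \<Rightarrow> c3) \<Rightarrow> (c3 \<Rightarrow> c3) \<Rightarrow> bool" where
  "lift_chart1 f g \<longleftrightarrow> hgerm_map g \<and>
     eventually (\<lambda>(x, u, v). x \<noteq> 0 \<longrightarrow>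
        (let q = f (x, x * u, x * v) in fst q \<noteq> 0 \<and>
          g (x, u, v) = (fst q, fst (snd q) / fst q, snd (snd q) / fst q))) (nhds 0)"

definition lift_chart2 :: "(c3 \<Rightarrow> c3) \<Rightarrow> (c3 \<Rightarrow> c3) \<Rightarrow> bool" where
  "lift_chart2 f g \<longleftrightarrow> hgerm_map g \<and>
     eventually (\<lambda>(u, y, v). y \<noteq> 0 \<longrightarrow>
        (let q = f (u * y, y, v * y) in fst (snd q) \<noteq> 0 \<and>
          g (u, y, v) = (fst q / fst (snd q), fst (snd q), snd (snd q) / fst (snd q)))) (nhds 0)"

definition lift_chart3 :: "complex \<Rightarrow> (c3 \<Rightarrow> c3) \<Rightarrow> (c3 \<Rightarrow> c3) \<Rightarrow> bool" where
  "lift_chart3 y0 f g \<longleftrightarrow> hgerm_map g \<and>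
     eventually (\<lambda>(u, w, z). z \<noteq> 0 \<longrightarrow>
        (let q = f (u * z, (w + y0) * z, z) in snd (snd q) \<noteq> 0 \<and>
          g (u, w, z) = (fst q / snd (snd q), fst (snd q) / snd (snd q) - y0, snd (snd q)))) (nhds 0)"

end

(* Away from {z = 0} we have f = id + z^c G with G = (x + P, z (beta + Q), z^2 R). Since z^c is not a
   zero divisor on germs, G is determined by f; its linear part (x, beta z, 0) is H_l, whose eigenlines
   are [1:0:0], [0:1:0] and, exactly when beta = 0, every [0:y0:1] (with eigenvalue 0).

   For the lifts, pull f back along a chart of the blow-up with exceptional coordinate s. A germ
   vanishing at 0 becomes divisible by s: the quotient a(s w)/s is holomorphic in s by the removable
   singularity theorem and jointly holomorphic by Osgood's argument, its s-derivative being continuous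
   by Cauchy's formula. Hence P in m^2 becomes s^2 Ph, the pulled-back map is s (D, U, V) up to order of
   the components with a unit D, and the lift is read off explicitly. Swapping y and z in the first
   chart, and shearing x by the constant Ph(0) times y, resp. z, in the other two, brings it to simple,
   spinning, resp. half corner normal form. *)

theory Submission
  imports Defs "HOL-Complex_Analysis.Complex_Analysis"
begin

abbreviation px :: "c3 \<Rightarrow> complex" where "px p \<equiv> fst p"
abbreviation py :: "c3 \<Rightarrow> complex" where "py p \<equiv> fst (snd p)"
abbreviation pz :: "c3 \<Rightarrow> complex" where "pz p \<equiv> snd (snd p)"

lemma csc_simps [simp]: "px (csc a v) = a * px v" "py (csc a v) = a * py v" "pz (csc a v) = a * pz v"
  by (simp_all add: csc_def)

lemma csc_0 [simp]: "csc 0 v = 0"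
  by (simp add: csc_def zero_prod_def)

lemma eventually_nhds_compose:
  assumes "isCont m x" "eventually P (nhds (m x))"
  shows "eventually (\<lambda>p. P (m p)) (nhds x)"
proof -
  obtain S where S: "open S" "m x \<in> S" "\<And>y. y \<in> S \<Longrightarrow> P y"
    using assms(2) unfolding eventually_nhds by blast
  obtain T where "open T" "x \<in> T" "\<And>y. y \<in> T \<Longrightarrow> m y \<in> S"
    using assms(1) S(1,2) unfolding continuous_at_open by metis
  then show ?thesis
    unfolding eventually_nhds using S(3) by blast
qed

subsection \<open>Holomorphic germs\<close>

definition csc_linear :: "(c3 \<Rightarrow> complex) \<Rightarrow> bool" where
  "csc_linear L \<longleftrightarrow> (\<forall>a v. L (csc a v) = a * L v)"

lemma csc_linearD: "csc_linear L \<Longrightarrow> L (csc a v) = a * L v"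
  unfolding csc_linear_def by blast

definition cdifferentiable_at :: "(c3 \<Rightarrow> complex) \<Rightarrow> c3 \<Rightarrow> bool" where
  "cdifferentiable_at g p \<longleftrightarrow> (\<exists>L. (g has_derivative L) (at p) \<and> csc_linear L)"

lemma hgerm_iff_eventually: "hgerm g \<longleftrightarrow> eventually (cdifferentiable_at g) (nhds 0)"
  unfolding hgerm_def holo3_def eventually_nhds cdifferentiable_at_def csc_linear_def by blast

lemma cdifferentiable_at_isCont: "cdifferentiable_at g p \<Longrightarrow> isCont g p"
  unfolding cdifferentiable_at_def using has_derivative_continuous by blast

lemma cdifferentiable_at_linear:
  assumes "bounded_linear L" "csc_linear L" shows "cdifferentiable_at L p"
  using assms bounded_linear.has_derivative[OF assms(1) has_derivative_ident]
  unfolding cdifferentiable_at_def by blast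

lemma cdifferentiable_at_add:
  assumes "cdifferentiable_at f p" "cdifferentiable_at g p"
  shows "cdifferentiable_at (\<lambda>p. f p + g p) p"
proof -
  obtain L M where "(f has_derivative L) (at p)" "csc_linear L" "(g has_derivative M) (at p)" "csc_linear M"
    using assms unfolding cdifferentiable_at_def by blast
  then show ?thesis unfolding cdifferentiable_at_def
    by (intro exI[of _ "\<lambda>h. L h + M h"] conjI has_derivative_add) (auto simp: csc_linear_def algebra_simps)
qed

lemma cdifferentiable_at_mult:
  assumes "cdifferentiable_at f p" "cdifferentiable_at g p"
  shows "cdifferentiable_at (\<lambda>p. f p * g p) p"
proof -
  obtain L M where "(f has_derivative L) (at p)" "csc_linear L" "(g has_derivative M) (at p)" "csc_linear M"
    using assms unfolding cdifferentiable_at_def by blast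
  then show ?thesis unfolding cdifferentiable_at_def
    by (intro exI[of _ "\<lambda>h. f p * M h + L h * g p"] conjI has_derivative_mult)
       (auto simp: csc_linear_def algebra_simps)
qed

lemma cdifferentiable_at_inverse:
  assumes "cdifferentiable_at f p" "f p \<noteq> 0"
  shows "cdifferentiable_at (\<lambda>p. inverse (f p)) p"
proof -
  obtain L where L: "(f has_derivative L) (at p)" "csc_linear L"
    using assms unfolding cdifferentiable_at_def by blast
  show ?thesis unfolding cdifferentiable_at_def
    using Deriv.has_derivative_inverse[OF assms(2) L(1)] L(2) by (auto simp: csc_linear_def algebra_simps)
qed

lemma cdifferentiable_at_compose:
  assumes "cdifferentiable_at g (f1 p, f2 p, f3 p)"
    "cdifferentiable_at f1 p" "cdifferentiable_at f2 p" "cdifferentiable_at f3 p"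
  shows "cdifferentiable_at (\<lambda>p. g (f1 p, f2 p, f3 p)) p"
proof -
  obtain L L1 L2 L3 where L: "(g has_derivative L) (at (f1 p, f2 p, f3 p))" "csc_linear L"
    and L1: "(f1 has_derivative L1) (at p)" "csc_linear L1"
    and L2: "(f2 has_derivative L2) (at p)" "csc_linear L2"
    and L3: "(f3 has_derivative L3) (at p)" "csc_linear L3"
    using assms unfolding cdifferentiable_at_def by blast
  have "((\<lambda>p. (f1 p, f2 p, f3 p)) has_derivative (\<lambda>h. (L1 h, L2 h, L3 h))) (at p)"
    using L1(1) L2(1) L3(1) by (intro has_derivative_Pair)
  from has_derivative_compose[OF this L(1)]
  have "((\<lambda>p. g (f1 p, f2 p, f3 p)) has_derivative (\<lambda>h. L (L1 h, L2 h, L3 h))) (at p)" .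
  moreover have "csc_linear (\<lambda>h. L (L1 h, L2 h, L3 h))"
    unfolding csc_linear_def
  proof (intro allI)
    fix a v
    have "(L1 (csc a v), L2 (csc a v), L3 (csc a v)) = csc a (L1 v, L2 v, L3 v)"
      using csc_linearD[OF L1(2)] csc_linearD[OF L2(2)] csc_linearD[OF L3(2)] by (simp add: csc_def)
    then show "L (L1 (csc a v), L2 (csc a v), L3 (csc a v)) = a * L (L1 v, L2 v, L3 v)"
      using csc_linearD[OF L(2)] by simp
  qed
  ultimately show ?thesis
    unfolding cdifferentiable_at_def by blast
qed

named_theorems hgerm_intros

lemma hgerm_const [hgerm_intros]: "hgerm (\<lambda>p. k)"
  unfolding hgerm_iff_eventually cdifferentiable_at_def csc_linear_def
  by (intro always_eventually allI exI[of _ "\<lambda>_. 0"]) auto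

lemma hgerm_linear:
  assumes "bounded_linear L" "csc_linear L" shows "hgerm L"
  unfolding hgerm_iff_eventually using cdifferentiable_at_linear[OF assms] by (simp add: always_eventually)

lemma hgerm_coordinates [hgerm_intros]: "hgerm px" "hgerm py" "hgerm pz"
  by (auto intro!: hgerm_linear bounded_linear_fst bounded_linear_snd bounded_linear_compose[of fst]
    bounded_linear_compose[of snd] simp: csc_linear_def)

lemma hgerm_add [hgerm_intros]: "hgerm f \<Longrightarrow> hgerm g \<Longrightarrow> hgerm (\<lambda>p. f p + g p)"
  unfolding hgerm_iff_eventually by (auto elim: eventually_elim2 intro: cdifferentiable_at_add)

lemma hgerm_mult [hgerm_intros]: "hgerm f \<Longrightarrow> hgerm g \<Longrightarrow> hgerm (\<lambda>p. f p * g p)"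
  unfolding hgerm_iff_eventually by (auto elim: eventually_elim2 intro: cdifferentiable_at_mult)

lemma hgerm_minus [hgerm_intros]: "hgerm f \<Longrightarrow> hgerm (\<lambda>p. - f p)"
  using hgerm_mult[OF hgerm_const[of "-1"]] by simp

lemma hgerm_diff [hgerm_intros]: "hgerm f \<Longrightarrow> hgerm g \<Longrightarrow> hgerm (\<lambda>p. f p - g p)"
  using hgerm_add[of f "\<lambda>p. - g p"] hgerm_minus by auto

lemma hgerm_power [hgerm_intros]: "hgerm f \<Longrightarrow> hgerm (\<lambda>p. f p ^ n)"
  by (induction n) (auto intro: hgerm_const hgerm_mult)

lemma hgerm_sum: "(\<And>i. i \<in> S \<Longrightarrow> hgerm (f i)) \<Longrightarrow> hgerm (\<lambda>p. \<Sum>i\<in>S. f i p)"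
  by (induction S rule: infinite_finite_induct) (auto intro: hgerm_const hgerm_add)

lemma hgerm_isCont: "hgerm g \<Longrightarrow> isCont g 0"
  unfolding hgerm_iff_eventually using eventually_nhds_x_imp_x cdifferentiable_at_isCont by blast

lemma hgerm_eventually_nonzero:
  assumes "hgerm g" "g 0 \<noteq> 0" shows "eventually (\<lambda>p. g p \<noteq> 0) (nhds 0)"
  using eventually_nhds_compose[OF hgerm_isCont[OF assms(1)] t1_space_nhds[OF assms(2)]] .

lemma hgerm_inverse:
  assumes "hgerm f" "f 0 \<noteq> 0" shows "hgerm (\<lambda>p. inverse (f p))"
  using assms(1) hgerm_eventually_nonzero[OF assms] unfolding hgerm_iff_eventually
  by (auto elim: eventually_elim2 intro: cdifferentiable_at_inverse)

lemma hgerm_divide: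
  assumes "hgerm f" "hgerm g" "g 0 \<noteq> 0" shows "hgerm (\<lambda>p. f p / g p)"
  using hgerm_mult[OF assms(1) hgerm_inverse[OF assms(2,3)]] by (simp add: divide_inverse)

lemma hgerm_compose:
  assumes "hgerm g" "hgerm f1" "hgerm f2" "hgerm f3" "f1 0 = 0" "f2 0 = 0" "f3 0 = 0"
  shows "hgerm (\<lambda>p. g (f1 p, f2 p, f3 p))"
proof -
  have "isCont (\<lambda>p. (f1 p, f2 p, f3 p)) 0"
    using hgerm_isCont[OF assms(2)] hgerm_isCont[OF assms(3)] hgerm_isCont[OF assms(4)]
    by (intro continuous_Pair)
  moreover have "(f1 0, f2 0, f3 0) = 0"
    using assms(5-7) by (simp add: zero_prod_def)
  ultimately have "eventually (\<lambda>p. cdifferentiable_at g (f1 p, f2 p, f3 p)) (nhds 0)"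
    using eventually_nhds_compose[where m="\<lambda>p. (f1 p, f2 p, f3 p)" and P="cdifferentiable_at g"] assms(1)
    unfolding hgerm_iff_eventually by simp
  with assms(2-4) show ?thesis unfolding hgerm_iff_eventually
    by eventually_elim (rule cdifferentiable_at_compose)
qed

lemma cdifferentiable_at_transform:
  assumes "cdifferentiable_at g p" "eventually (\<lambda>q. g q = h q) (nhds p)"
  shows "cdifferentiable_at h p"
proof -
  obtain L where L: "(g has_derivative L) (at p)" "csc_linear L"
    using assms(1) unfolding cdifferentiable_at_def by blast
  have "(h has_derivative L) (at p)"
  proof (rule has_derivative_transform_eventually[OF L(1)])
    show "\<forall>\<^sub>F q in at p. g q = h q"
      using assms(2) by (simp add: eventually_at_filter eventually_mono)
  qed (use eventually_nhds_x_imp_x[OF assms(2)] in auto)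
  with L(2) show ?thesis unfolding cdifferentiable_at_def by blast
qed

lemma hgerm_cong:
  assumes "hgerm g" "eventually (\<lambda>p. g p = h p) (nhds 0)" shows "hgerm h"
proof -
  have "eventually (\<lambda>p. eventually (\<lambda>q. g q = h q) (nhds p)) (nhds 0)"
    using assms(2) by (simp only: eventually_eventually)
  with assms(1) show ?thesis unfolding hgerm_iff_eventually
    by eventually_elim (rule cdifferentiable_at_transform)
qed

subsection \<open>Division by the exceptional coordinate\<close>

lemma line_has_field_derivative:
  assumes "(a has_derivative L) (at (csc t w))" "csc_linear L"
  shows "((\<lambda>s. a (csc s w)) has_field_derivative L w) (at t)"
proof -
  have "((\<lambda>s. csc s w) has_derivative (\<lambda>h. csc h w)) (at t)"
    unfolding csc_def by (intro has_derivative_Pair has_derivative_mult_left has_derivative_ident)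
  from has_derivative_compose[OF this assms(1)] have "((\<lambda>s. a (csc s w)) has_derivative (\<lambda>h. L (csc h w))) (at t)" .
  moreover have "(\<lambda>h. L (csc h w)) = (*) (L w)"
    using csc_linearD[OF assms(2)] by (auto simp: mult.commute)
  ultimately show ?thesis by (simp add: has_field_derivative_def)
qed

lemma line_field_differentiable:
  "cdifferentiable_at a (csc t w) \<Longrightarrow> (\<lambda>s. a (csc s w)) field_differentiable (at t)"
  unfolding cdifferentiable_at_def field_differentiable_def using line_has_field_derivative by blast

definition line_quotient :: "(c3 \<Rightarrow> complex) \<Rightarrow> c3 \<Rightarrow> complex \<Rightarrow> complex" where
  "line_quotient a w x = (if x = 0 then deriv (\<lambda>t. a (csc t w)) 0 else a (csc x w) / x)"

lemma line_quotient_eq: "a 0 = 0 \<Longrightarrow> a (csc x w) = x * line_quotient a w x"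
  by (simp add: line_quotient_def)

lemma line_quotient_0:
  assumes "(a has_derivative L) (at 0)" "csc_linear L"
  shows "line_quotient a w 0 = L w"
  using line_has_field_derivative[of a L 0 w] assms by (simp add: line_quotient_def DERIV_imp_deriv)

lemma line_quotient_holomorphic:
  assumes "a 0 = 0" "\<And>t. t \<in> ball 0 R \<Longrightarrow> cdifferentiable_at a (csc t w)"
  shows "line_quotient a w holomorphic_on ball 0 R"
proof -
  have "(\<lambda>t. a (csc t w)) holomorphic_on ball 0 R"
    using assms(2) line_field_differentiable by (simp add: holomorphic_on_def field_differentiable_at_within)
  from pole_lemma_open[OF this open_ball, of 0] show ?thesis
    using assms(1) by (simp add: line_quotient_def[abs_def] if_distrib cong: if_cong)
qed

definition blowup_dir :: "complex \<Rightarrow> complex \<Rightarrow> complex \<times> complex \<Rightarrow> c3" where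
  "blowup_dir cy cz q = (1, fst q + cy, snd q + cz)"

lemma csc_blowup_dir [simp]: "csc x (blowup_dir cy cz (u, v)) = (x, x * (u + cy), x * (v + cz))"
  by (simp add: csc_def blowup_dir_def)

lemma line_quotient_has_derivative_param:
  assumes "cdifferentiable_at a (csc x (blowup_dir cy cz q))"
  obtains F where "((\<lambda>q. line_quotient a (blowup_dir cy cz q) x) has_derivative F) (at q)"
    "\<And>s h. F (s * fst h, s * snd h) = s * F h"
proof -
  obtain L where L: "(a has_derivative L) (at (csc x (blowup_dir cy cz q)))" "csc_linear L"
    using assms unfolding cdifferentiable_at_def by blast
  have dir: "((\<lambda>q. csc t (blowup_dir cy cz q)) has_derivative (\<lambda>h. (0, t * fst h, t * snd h))) (at q)" for t
  proof -
    have "((\<lambda>q. (t, t * (fst q + cy), t * (snd q + cz))) has_derivative (\<lambda>h. (0, t * fst h, t * snd h))) (at q)"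
      by (intro has_derivative_Pair has_derivative_const has_derivative_add_const has_derivative_fst
          has_derivative_snd has_derivative_ident has_derivative_mult_right)
    then show ?thesis by (simp add: csc_def blowup_dir_def)
  qed
  have hom: "L (0, t * (s * fst h), t * (s * snd h)) = s * L (0, t * fst h, t * snd h)" for t s h
    using csc_linearD[OF L(2), of s "(0, t * fst h, t * snd h)"] by (simp add: csc_def mult.left_commute)
  show thesis
  proof (cases "x = 0")
    case True
    then have "line_quotient a (blowup_dir cy cz q') x = L (blowup_dir cy cz q')" for q'
      using line_quotient_0 L by simp
    moreover have "((\<lambda>q. L (blowup_dir cy cz q)) has_derivative (\<lambda>h. L (0, fst h, snd h))) (at q)"
      using bounded_linear.has_derivative[OF has_derivative_bounded_linear[OF L(1)] dir[of 1]]
      by (simp add: csc_def blowup_dir_def)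
    ultimately show thesis
      using that hom[of 1] by simp
  next
    case False
    then have "line_quotient a (blowup_dir cy cz q') x = a (csc x (blowup_dir cy cz q')) * inverse x" for q'
      by (simp add: line_quotient_def divide_inverse)
    moreover have "((\<lambda>q. a (csc x (blowup_dir cy cz q)) * inverse x) has_derivative
        (\<lambda>h. L (0, x * fst h, x * snd h) * inverse x)) (at q)"
      using has_derivative_compose[OF dir L(1)] by (rule has_derivative_mult_left)
    ultimately show thesis
      using that hom by (simp add: mult.assoc)
  qed
qed

lemma continuous_on_deriv_param:
  fixes F :: "'a::topological_space \<Rightarrow> complex \<Rightarrow> complex"
  assumes cont: "continuous_on (X \<times> sphere 0 r) (\<lambda>(q, z). F q z)"
    and hol: "\<And>q. q \<in> X \<Longrightarrow> F q holomorphic_on ball 0 r"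
    and cont_q: "\<And>q. q \<in> X \<Longrightarrow> continuous_on (cball 0 r) (F q)"
    and "0 \<le> s" "s < r"
  shows "continuous_on (X \<times> ball 0 s) (\<lambda>(q, z). deriv (F q) z)"
proof -
  define \<gamma> where "\<gamma> = circlepath (0::complex) r"
  define K where "K = (\<lambda>(qz :: 'a \<times> complex) t.
    F (fst qz) (\<gamma> t) * (2 * pi * \<i> * r * exp (2 * of_real pi * \<i> * t)) / (\<gamma> t - snd qz)^2)"
  have norm_\<gamma>: "norm (\<gamma> t) = r" for t
    using \<open>0 \<le> s\<close> \<open>s < r\<close> by (simp add: \<gamma>_def circlepath norm_mult)
  have deriv_eq: "deriv (F q) z = integral (cbox 0 1) (K (q, z)) / (2 * of_real pi * \<i>)"
    if "q \<in> X" "z \<in> ball 0 s" for q z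
  proof -
    have "z \<in> ball 0 r" using that(2) \<open>s < r\<close> by auto
    from Cauchy_derivative_integral_circlepath(2)[OF cont_q[OF that(1)] hol[OF that(1)] this]
    show ?thesis
      by (simp add: DERIV_imp_deriv contour_integral_integral vector_derivative_circlepath K_def \<gamma>_def
          cbox_interval)
  qed
  have \<gamma>_cont: "continuous_on ((X \<times> ball 0 s) \<times> cbox 0 1) (\<lambda>x. \<gamma> (snd x))"
    unfolding \<gamma>_def circlepath by (intro continuous_intros)
  have "continuous_on ((X \<times> ball 0 s) \<times> cbox 0 1) (\<lambda>x. (fst (fst x), \<gamma> (snd x)))"
    by (rule continuous_on_Pair[OF _ \<gamma>_cont]) (intro continuous_intros)
  then have F_cont: "continuous_on ((X \<times> ball 0 s) \<times> cbox 0 1) (\<lambda>x. F (fst (fst x)) (\<gamma> (snd x)))"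
    using continuous_on_compose2[OF cont] norm_\<gamma> by fastforce
  have "\<gamma> t - z \<noteq> 0" if "z \<in> ball 0 s" for t z
    using that norm_\<gamma>[of t] \<open>s < r\<close> by auto
  then have "continuous_on ((X \<times> ball 0 s) \<times> cbox 0 1) (\<lambda>(qz, t). K qz t)"
    unfolding K_def case_prod_unfold by (intro continuous_intros F_cont \<gamma>_cont) auto
  then have "continuous_on (X \<times> ball 0 s) (\<lambda>qz. integral (cbox 0 1) (K qz) / (2 * of_real pi * \<i>))"
    by (intro continuous_on_divide continuous_on_const integral_continuous_on_param) auto
  then show ?thesis
    by (rule continuous_on_eq) (auto simp: deriv_eq)
qed

lemma has_derivative_partials_holomorphic:
  fixes F :: "'a::real_normed_vector \<Rightarrow> complex \<Rightarrow> complex"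
  assumes "open X" "open Y" "convex Y" "q \<in> X" "x \<in> Y"
    and Fq: "((\<lambda>q. F q x) has_derivative Fq) (at q)"
    and D: "\<And>q x. q \<in> X \<Longrightarrow> x \<in> Y \<Longrightarrow> (F q has_field_derivative D q x) (at x)"
    and D_cont: "continuous_on (X \<times> Y) (\<lambda>(q, x). D q x)"
  shows "((\<lambda>(q, x). F q x) has_derivative (\<lambda>(hq, hx). Fq hq + hx * D q x)) (at (q, x))"
proof -
  have Fx: "(F q has_derivative blinfun_apply (blinfun_mult_left (D q x))) (at x within Y)"
    if "q \<in> X" "x \<in> Y" for q x
  proof -
    have "blinfun_apply (blinfun_mult_left (D q x)) = (*) (D q x)"
      by (auto simp: blinfun_mult_left.rep_eq mult.commute)
    with D[OF that] show ?thesis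
      by (simp add: has_field_derivative_def has_derivative_at_withinI)
  qed
  have "continuous_on (X \<times> Y) (\<lambda>z. blinfun_mult_left ((\<lambda>(q, x). D q x) z))"
    using D_cont by (rule bounded_linear.continuous_on[OF bounded_linear_blinfun_mult_left])
  then have Fx_cont: "continuous (at (q, x) within X \<times> Y) (\<lambda>(q, x). blinfun_mult_left (D q x))"
    using assms(4,5) by (simp add: continuous_on_eq_continuous_within case_prod_unfold)
  have "((\<lambda>(q, x). F q x) has_derivative (\<lambda>(hq, hx). Fq hq + blinfun_mult_left (D q x) hx))
      (at (q, x) within X \<times> Y)"
    by (rule has_derivative_partialsI[where f=F and X=X and Y=Y,
          OF has_derivative_at_withinI[OF Fq] Fx Fx_cont assms(5,3)])
  moreover have "at (q, x) within X \<times> Y = at (q, x)"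
    using assms(1,2,4,5) by (intro at_within_open) (auto intro: open_Times)
  moreover have "(\<lambda>(hq, hx). Fq hq + blinfun_mult_left (D q x) hx) = (\<lambda>(hq, hx). Fq hq + hx * D q x)"
    by (auto simp: blinfun_mult_left.rep_eq)
  ultimately show ?thesis by simp
qed

lemma cdifferentiable_at_near_blowup_lines:
  assumes "hgerm a"
  obtains \<delta> where "\<delta> > 0"
    "\<And>q t. norm q < \<delta> \<Longrightarrow> norm t < \<delta> \<Longrightarrow> cdifferentiable_at a (csc t (blowup_dir cy cz q))"
proof -
  define m where "m z = csc (snd z) (blowup_dir cy cz (fst z))" for z :: "(complex \<times> complex) \<times> complex"
  have "isCont m (0, 0)"
    unfolding m_def csc_def blowup_dir_def by (intro continuous_intros)
  moreover have "eventually (cdifferentiable_at a) (nhds (m (0, 0)))"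
    using assms by (simp add: hgerm_iff_eventually m_def)
  ultimately have "eventually (\<lambda>z. cdifferentiable_at a (m z)) (nhds (0, 0))"
    by (rule eventually_nhds_compose)
  then obtain d where "d > 0"
    "\<And>qt. dist qt (0, 0) < d \<Longrightarrow> cdifferentiable_at a (csc (snd qt) (blowup_dir cy cz (fst qt)))"
    unfolding eventually_nhds_metric m_def by blast
  moreover have "dist (q, t) (0, 0) < d" if "norm q < d / 2" "norm t < d / 2"
    for q :: "complex \<times> complex" and t :: complex
    using norm_Pair_le[of q t] that by (simp add: dist_norm zero_prod_def[symmetric])
  ultimately show thesis using that[of "d / 2"] by fastforce
qed

lemma line_quotient_deriv_continuous:
  assumes "a 0 = 0" "\<delta> > 0"
    and \<delta>: "\<And>q t. norm q < \<delta> \<Longrightarrow> norm t < \<delta> \<Longrightarrow> cdifferentiable_at a (csc t (blowup_dir cy cz q))"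
  shows "continuous_on (ball 0 \<delta> \<times> ball 0 (\<delta> / 4)) (\<lambda>(q, x). deriv (line_quotient a (blowup_dir cy cz q)) x)"
proof -
  let ?X = "ball (0 :: complex \<times> complex) \<delta>"
  have "continuous_on (?X \<times> sphere 0 (\<delta> / 2)) (\<lambda>z. a (csc (snd z) (blowup_dir cy cz (fst z))) / snd z)"
  proof (intro continuous_at_imp_continuous_on ballI)
    fix z :: "(complex \<times> complex) \<times> complex" assume "z \<in> ?X \<times> sphere 0 (\<delta> / 2)"
    then have a_cont: "isCont a (csc (snd z) (blowup_dir cy cz (fst z)))" and "snd z \<noteq> 0"
      using \<delta> \<open>\<delta> > 0\<close> cdifferentiable_at_isCont by auto
    have "isCont (\<lambda>z. csc (snd z) (blowup_dir cy cz (fst z))) z"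
      unfolding csc_def blowup_dir_def by (intro continuous_intros)
    from isCont_o2[OF this a_cont] show "isCont (\<lambda>z. a (csc (snd z) (blowup_dir cy cz (fst z))) / snd z) z"
      by (rule isCont_divide) (use \<open>snd z \<noteq> 0\<close> in \<open>auto intro: continuous_intros\<close>)
  qed
  then have "continuous_on (?X \<times> sphere 0 (\<delta> / 2)) (\<lambda>(q, x). line_quotient a (blowup_dir cy cz q) x)"
    by (rule continuous_on_eq) (use \<open>\<delta> > 0\<close> in \<open>auto simp: line_quotient_def\<close>)
  moreover have hol: "line_quotient a (blowup_dir cy cz q) holomorphic_on ball 0 \<delta>" if "q \<in> ?X" for q
    using that \<delta> assms(1) by (intro line_quotient_holomorphic) auto
  have "cball 0 (\<delta> / 2) \<subseteq> ball (0 :: complex) \<delta>" "ball 0 (\<delta> / 2) \<subseteq> ball (0 :: complex) \<delta>"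
    using \<open>\<delta> > 0\<close> by auto
  ultimately show ?thesis
    using \<open>\<delta> > 0\<close> holomorphic_on_subset[OF hol] holomorphic_on_imp_continuous_on
    by (intro continuous_on_deriv_param) auto
qed

lemma line_quotient_cdifferentiable:
  assumes "a 0 = 0" "\<delta> > 0"
    and \<delta>: "\<And>q t. norm q < \<delta> \<Longrightarrow> norm t < \<delta> \<Longrightarrow> cdifferentiable_at a (csc t (blowup_dir cy cz q))"
    and p: "norm (py p, pz p) < \<delta>" "norm (px p) < \<delta> / 4"
  shows "cdifferentiable_at (\<lambda>p. line_quotient a (blowup_dir cy cz (py p, pz p)) (px p)) p"
proof -
  let ?\<Psi> = "\<lambda>q. line_quotient a (blowup_dir cy cz q)"
  define \<sigma> where "\<sigma> p = ((py p, pz p), px p)" for p :: c3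
  have "cdifferentiable_at a (csc (px p) (blowup_dir cy cz (py p, pz p)))"
    using p \<open>\<delta> > 0\<close> by (intro \<delta>) auto
  from line_quotient_has_derivative_param[OF this]
  obtain Fq where Fq: "((\<lambda>q. ?\<Psi> q (px p)) has_derivative Fq) (at (py p, pz p))"
    "\<And>s h. Fq (s * fst h, s * snd h) = s * Fq h"
    by blast
  define D where "D = deriv (?\<Psi> (py p, pz p)) (px p)"
  have "(?\<Psi> q has_field_derivative deriv (?\<Psi> q) x) (at x)" if "q \<in> ball 0 \<delta>" "x \<in> ball 0 (\<delta> / 4)" for q x
    using that \<delta> assms(1) \<open>\<delta> > 0\<close>
    by (intro holomorphic_derivI[of _ "ball 0 \<delta>"] line_quotient_holomorphic) auto
  from has_derivative_partials_holomorphic[where X="ball 0 \<delta>" and Y="ball 0 (\<delta> / 4)", OF _ _ _ _ _ Fq(1) this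
      line_quotient_deriv_continuous[OF assms(1-3)]] p
  have "((\<lambda>(q, x). ?\<Psi> q x) has_derivative (\<lambda>(hq, hx). Fq hq + hx * D)) (at (\<sigma> p))"
    by (simp add: D_def \<sigma>_def)
  moreover have "(\<sigma> has_derivative \<sigma>) (at p)"
    unfolding \<sigma>_def by (intro has_derivative_Pair has_derivative_fst has_derivative_snd has_derivative_ident)
  ultimately have "((\<lambda>p. ?\<Psi> (py p, pz p) (px p)) has_derivative (\<lambda>h. Fq (py h, pz h) + px h * D)) (at p)"
    using has_derivative_compose by (fastforce simp: \<sigma>_def)
  moreover have "csc_linear (\<lambda>h. Fq (py h, pz h) + px h * D)"
    unfolding csc_linear_def using Fq(2) by (simp add: algebra_simps)
  ultimately show ?thesis
    unfolding cdifferentiable_at_def by blast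
qed

lemma hgerm_blowup_quotient:
  fixes cy cz :: complex
  assumes "hgerm a" "a 0 = 0"
  shows "\<exists>A. hgerm A \<and> (\<forall>x u v. a (x, x * (u + cy), x * (v + cz)) = x * A (x, u, v))"
proof -
  obtain \<delta> where "\<delta> > 0"
    and \<delta>: "\<And>q t. norm q < \<delta> \<Longrightarrow> norm t < \<delta> \<Longrightarrow> cdifferentiable_at a (csc t (blowup_dir cy cz q))"
    using cdifferentiable_at_near_blowup_lines[OF assms(1)] by blast
  define \<sigma> where "\<sigma> p = ((py p, pz p), px p)" for p :: c3
  have "isCont \<sigma> 0"
    unfolding \<sigma>_def by (intro continuous_intros)
  moreover have "eventually (\<lambda>z. z \<in> ball 0 \<delta> \<times> ball 0 (\<delta> / 4)) (nhds (\<sigma> 0))"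
    using \<open>\<delta> > 0\<close> by (intro eventually_nhds_in_open) (auto simp: \<sigma>_def open_Times zero_prod_def)
  ultimately have "eventually (\<lambda>p. \<sigma> p \<in> ball 0 \<delta> \<times> ball 0 (\<delta> / 4)) (nhds 0)"
    by (rule eventually_nhds_compose)
  then have "hgerm (\<lambda>p. line_quotient a (blowup_dir cy cz (py p, pz p)) (px p))"
    unfolding hgerm_iff_eventually
  proof (rule eventually_mono)
    fix p assume "\<sigma> p \<in> ball 0 \<delta> \<times> ball 0 (\<delta> / 4)"
    then show "cdifferentiable_at (\<lambda>p. line_quotient a (blowup_dir cy cz (py p, pz p)) (px p)) p"
      by (intro line_quotient_cdifferentiable[OF assms(2) \<open>\<delta> > 0\<close> \<delta>]) (auto simp: \<sigma>_def)
  qed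
  moreover have "a (x, x * (u + cy), x * (v + cz)) = x * line_quotient a (blowup_dir cy cz (u, v)) x" for x u v
    using line_quotient_eq[where a=a and x=x and w="blowup_dir cy cz (u, v)", OF assms(2)] by simp
  ultimately show ?thesis
    by (intro exI[of _ "\<lambda>p. line_quotient a (blowup_dir cy cz (py p, pz p)) (px p)"]) simp
qed

subsection \<open>The maximal ideal and its square\<close>

lemma in_mI: "hgerm g \<Longrightarrow> g 0 = 0 \<Longrightarrow> in_m g"
  by (simp add: in_m_def)

lemma in_m_coordinates: "in_m px" "in_m py" "in_m pz"
  by (auto intro: in_mI hgerm_coordinates simp: zero_prod_def)

lemma in_m2_sum:
  assumes "finite I" "\<And>i. i \<in> I \<Longrightarrow> in_m (a i) \<and> in_m (b i)"
    "eventually (\<lambda>p. g p = (\<Sum>i\<in>I. a i p * b i p)) (nhds 0)"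
  shows "in_m2 g"
proof -
  obtain h where h: "bij_betw h {..<card I} I"
    using ex_bij_betw_nat_finite[OF assms(1)] by (auto simp: lessThan_atLeast0)
  then have "(\<Sum>i\<in>I. a i p * b i p) = (\<Sum>j<card I. a (h j) p * b (h j) p)" for p
    using sum.reindex_bij_betw[OF h, of "\<lambda>i. a i p * b i p"] by simp
  moreover have "\<forall>j<card I. in_m (a (h j)) \<and> in_m (b (h j))"
    using assms(2) bij_betw_apply[OF h] by simp
  ultimately show ?thesis unfolding in_m2_def using assms(3)
    by (intro exI[of _ "card I"] exI[of _ "\<lambda>j. a (h j)"] exI[of _ "\<lambda>j. b (h j)"]) auto
qed

lemma in_m2E:
  assumes "in_m2 g"
  obtains n :: nat and a b where "\<And>i. i < n \<Longrightarrow> in_m (a i) \<and> in_m (b i)"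
    "eventually (\<lambda>p. g p = (\<Sum>i<n. a i p * b i p)) (nhds 0)"
  using assms unfolding in_m2_def by blast

lemma in_m2_mult: "in_m f \<Longrightarrow> in_m g \<Longrightarrow> in_m2 (\<lambda>p. f p * g p)"
  by (rule in_m2_sum[where I="{()}" and a="\<lambda>_. f" and b="\<lambda>_. g"]) auto

lemma in_m2_add:
  assumes "in_m2 f" "in_m2 g" shows "in_m2 (\<lambda>p. f p + g p)"
proof -
  obtain n :: nat and a b where f: "\<And>i. i < n \<Longrightarrow> in_m (a i) \<and> in_m (b i)"
    "eventually (\<lambda>p. f p = (\<Sum>i<n. a i p * b i p)) (nhds 0)"
    using in_m2E[OF assms(1)] by blast
  obtain n' :: nat and a' b' where g: "\<And>i. i < n' \<Longrightarrow> in_m (a' i) \<and> in_m (b' i)"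
    "eventually (\<lambda>p. g p = (\<Sum>i<n'. a' i p * b' i p)) (nhds 0)"
    using in_m2E[OF assms(2)] by blast
  have "(\<Sum>i\<in>{..<n} <+> {..<n'}. case_sum a a' i p * case_sum b b' i p) =
      (\<Sum>i<n. a i p * b i p) + (\<Sum>i<n'. a' i p * b' i p)" for p
    by (simp add: sum.Plus)
  with f g show ?thesis
    by (intro in_m2_sum[where I="{..<n} <+> {..<n'}" and a="case_sum a a'" and b="case_sum b b'"])
       (auto elim: eventually_elim2)
qed

lemma in_m2_hgerm_mult:
  assumes "hgerm h" "in_m2 f" shows "in_m2 (\<lambda>p. h p * f p)"
proof -
  obtain n :: nat and a b where f: "\<And>i. i < n \<Longrightarrow> in_m (a i) \<and> in_m (b i)"
    "eventually (\<lambda>p. f p = (\<Sum>i<n. a i p * b i p)) (nhds 0)"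
    using in_m2E[OF assms(2)] by blast
  have "in_m (\<lambda>p. h p * a i p)" if "i < n" for i
    using f(1)[OF that] assms(1) by (auto intro: in_mI hgerm_mult simp: in_m_def)
  with f show ?thesis
    by (intro in_m2_sum[where I="{..<n}" and a="\<lambda>i p. h p * a i p" and b=b])
       (auto elim!: eventually_mono simp: sum_distrib_left mult.assoc)
qed

lemma in_m2_hgerm: "in_m2 P \<Longrightarrow> hgerm P"
proof (elim in_m2E)
  fix n :: nat and a b
  assume ab: "\<And>i. i < n \<Longrightarrow> in_m (a i) \<and> in_m (b i)"
    and P: "eventually (\<lambda>p. P p = (\<Sum>i<n. a i p * b i p)) (nhds 0)"
  have "hgerm (\<lambda>p. \<Sum>i<n. a i p * b i p)"
    using ab by (intro hgerm_sum hgerm_mult) (simp_all add: in_m_def)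
  moreover have "eventually (\<lambda>p. (\<Sum>i<n. a i p * b i p) = P p) (nhds 0)"
    using P by (simp add: eq_commute)
  ultimately show "hgerm P" by (rule hgerm_cong)
qed

lemma in_m2_zero: "in_m2 P \<Longrightarrow> P 0 = 0"
proof (elim in_m2E)
  fix n :: nat and a b
  assume ab: "\<And>i. i < n \<Longrightarrow> in_m (a i) \<and> in_m (b i)"
    and P: "eventually (\<lambda>p. P p = (\<Sum>i<n. a i p * b i p)) (nhds 0)"
  have "P 0 = (\<Sum>i<n. a i 0 * b i 0)" using eventually_nhds_x_imp_x[OF P] .
  also have "\<dots> = 0" using ab by (intro sum.neutral) (simp add: in_m_def)
  finally show "P 0 = 0" .
qed

subsection \<open>Pullbacks along the blow-up charts\<close>

lemma hgerm_map_isCont: "hgerm_map m \<Longrightarrow> isCont m 0"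
  unfolding hgerm_map_def using continuous_Pair[of "at 0" "\<lambda>p. px (m p)" "\<lambda>p. snd (m p)"]
    continuous_Pair[of "at 0" "\<lambda>p. py (m p)" "\<lambda>p. pz (m p)"] hgerm_isCont by simp

lemma hgerm_pullback:
  assumes "hgerm a" "hgerm_map m" "m 0 = 0" shows "hgerm (\<lambda>p. a (m p))"
  using hgerm_compose[OF assms(1), of "\<lambda>p. px (m p)" "\<lambda>p. py (m p)" "\<lambda>p. pz (m p)"] assms(2,3)
  by (simp add: hgerm_map_def zero_prod_def)

lemma eventually_pullback:
  assumes "hgerm_map m" "m 0 = 0" "eventually P (nhds 0)"
  shows "eventually (\<lambda>p. P (m p)) (nhds 0)"
  using eventually_nhds_compose[OF hgerm_map_isCont[OF assms(1)]] assms(2,3) by simp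

definition pullbacks_divisible :: "(c3 \<Rightarrow> c3) \<Rightarrow> (c3 \<Rightarrow> complex) \<Rightarrow> bool" where
  "pullbacks_divisible m s \<longleftrightarrow> (\<forall>a. in_m a \<longrightarrow> (\<exists>A. hgerm A \<and> (\<forall>p. a (m p) = s p * A p)))"

lemma in_m2_pullback:
  assumes "in_m2 P" "pullbacks_divisible m s" "isCont m 0" "m 0 = 0"
  obtains Ph where "hgerm Ph" "eventually (\<lambda>p. P (m p) = s p ^ 2 * Ph p) (nhds 0)"
proof -
  obtain n :: nat and a b where ab: "\<And>i. i < n \<Longrightarrow> in_m (a i) \<and> in_m (b i)"
    and P: "eventually (\<lambda>p. P p = (\<Sum>i<n. a i p * b i p)) (nhds 0)"
    using in_m2E[OF assms(1)] by blast
  have "\<exists>AB. i < n \<longrightarrow> hgerm (fst AB) \<and> hgerm (snd AB) \<and>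
      (\<forall>p. a i (m p) = s p * fst AB p \<and> b i (m p) = s p * snd AB p)" for i
  proof (cases "i < n")
    case True
    then obtain A B where "hgerm A" "\<forall>p. a i (m p) = s p * A p" "hgerm B" "\<forall>p. b i (m p) = s p * B p"
      using ab assms(2) unfolding pullbacks_divisible_def by meson
    then show ?thesis by (intro exI[of _ "(A, B)"]) simp
  qed simp
  then obtain AB where AB: "\<And>i. i < n \<Longrightarrow> hgerm (fst (AB i)) \<and> hgerm (snd (AB i)) \<and>
      (\<forall>p. a i (m p) = s p * fst (AB i) p \<and> b i (m p) = s p * snd (AB i) p)"
    by metis
  have "hgerm (\<lambda>p. \<Sum>i<n. fst (AB i) p * snd (AB i) p)"
    using AB by (intro hgerm_sum hgerm_mult) auto
  moreover have "eventually (\<lambda>p. P (m p) = (\<Sum>i<n. a i (m p) * b i (m p))) (nhds 0)"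
    using eventually_nhds_compose[OF assms(3)] P assms(4) by simp
  then have "eventually (\<lambda>p. P (m p) = s p ^ 2 * (\<Sum>i<n. fst (AB i) p * snd (AB i) p)) (nhds 0)"
    by (rule eventually_mono) (simp add: AB sum_distrib_left power2_eq_square mult_ac)
  ultimately show thesis by (rule that)
qed

definition blowup1 :: "c3 \<Rightarrow> c3" where "blowup1 p = (px p, px p * py p, px p * pz p)"
definition blowup2 :: "c3 \<Rightarrow> c3" where "blowup2 p = (px p * py p, py p, pz p * py p)"
definition blowup3 :: "complex \<Rightarrow> c3 \<Rightarrow> c3" where "blowup3 y0 p = (px p * pz p, (py p + y0) * pz p, pz p)"

lemma blowup_simps [simp]:
  "blowup1 (x, u, v) = (x, x * u, x * v)" "blowup2 (u, y, v) = (u * y, y, v * y)"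
  "blowup3 y0 (u, w, z) = (u * z, (w + y0) * z, z)"
  "blowup1 0 = 0" "blowup2 0 = 0" "blowup3 y0 0 = 0"
  by (simp_all add: blowup1_def blowup2_def blowup3_def zero_prod_def)

lemma hgerm_map_blowup: "hgerm_map blowup1" "hgerm_map blowup2" "hgerm_map (blowup3 y0)"
  by (simp_all add: hgerm_map_def blowup1_def blowup2_def blowup3_def hgerm_intros)

lemma pullbacks_divisible_blowup1: "pullbacks_divisible blowup1 px"
  unfolding pullbacks_divisible_def in_m_def
proof safe
  fix a assume "hgerm a" "a 0 = 0"
  then obtain A where "hgerm A" "\<And>x u v. a (x, x * (u + 0), x * (v + 0)) = x * A (x, u, v)"
    using hgerm_blowup_quotient[where cy=0 and cz=0] by blast
  then show "\<exists>A. hgerm A \<and> (\<forall>p. a (blowup1 p) = px p * A p)"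
    by (auto simp: blowup1_def)
qed

lemma pullbacks_divisible_blowup2: "pullbacks_divisible blowup2 py"
  unfolding pullbacks_divisible_def in_m_def
proof safe
  fix a assume "hgerm a" "a 0 = 0"
  then have "hgerm (\<lambda>p. a (py p, px p, pz p))" "a (py 0, px 0, pz 0) = 0"
    by (auto intro: hgerm_compose hgerm_coordinates simp: zero_prod_def)
  then obtain A where A: "hgerm A" "\<And>y u v. a (y * u, y, y * v) = y * A (y, u, v)"
    using hgerm_blowup_quotient[where cy=0 and cz=0] by fastforce
  have "hgerm (\<lambda>p. A (py p, px p, pz p))"
    using A(1) by (auto intro: hgerm_compose hgerm_coordinates simp: zero_prod_def)
  moreover have "a (blowup2 p) = py p * A (py p, px p, pz p)" for p
    using A(2)[of "py p" "px p" "pz p"] by (simp add: blowup2_def mult.commute)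
  ultimately show "\<exists>A. hgerm A \<and> (\<forall>p. a (blowup2 p) = py p * A p)" by blast
qed

lemma pullbacks_divisible_blowup3: "pullbacks_divisible (blowup3 y0) pz"
  unfolding pullbacks_divisible_def in_m_def
proof safe
  fix a assume "hgerm a" "a 0 = 0"
  then have "hgerm (\<lambda>p. a (py p, pz p, px p))" "a (py 0, pz 0, px 0) = 0"
    by (auto intro: hgerm_compose hgerm_coordinates simp: zero_prod_def)
  then obtain A where A: "hgerm A" "\<And>z u w. a (z * u, z * (w + y0), z) = z * A (z, u, w)"
    using hgerm_blowup_quotient[where cy=0 and cz=y0] by fastforce
  have "hgerm (\<lambda>p. A (pz p, px p, py p))"
    using A(1) by (auto intro: hgerm_compose hgerm_coordinates simp: zero_prod_def)
  moreover have "a (blowup3 y0 p) = pz p * A (pz p, px p, py p)" for p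
    using A(2)[of "pz p" "px p" "py p"] by (simp add: blowup3_def mult.commute)
  ultimately show "\<exists>A. hgerm A \<and> (\<forall>p. a (blowup3 y0 p) = pz p * A p)" by blast
qed

subsection \<open>Singular directions of a half corner\<close>

definition half_corner_map ::
  "nat \<Rightarrow> complex \<Rightarrow> (c3 \<Rightarrow> complex) \<Rightarrow> (c3 \<Rightarrow> complex) \<Rightarrow> (c3 \<Rightarrow> complex) \<Rightarrow> c3 \<Rightarrow> c3" where
  "half_corner_map c \<beta> P Q R p =
     (px p + pz p ^ c * (px p + P p), py p + pz p ^ (c + 1) * (\<beta> + Q p), pz p + pz p ^ (c + 2) * R p)"

lemma half_corner_form_iff:
  "half_corner_form c \<beta> P Q R f \<longleftrightarrow> 0 < c \<and> in_m2 P \<and> in_m Q \<and> hgerm R \<and>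
     eventually (\<lambda>p. f p = half_corner_map c \<beta> P Q R p) (nhds 0)"
  by (simp add: half_corner_form_def half_corner_map_def case_prod_unfold)

definition half_corner_field ::
  "complex \<Rightarrow> (c3 \<Rightarrow> complex) \<Rightarrow> (c3 \<Rightarrow> complex) \<Rightarrow> (c3 \<Rightarrow> complex) \<Rightarrow> c3 \<Rightarrow> c3" where
  "half_corner_field \<beta> P Q R p = (px p + P p, pz p * (\<beta> + Q p), pz p ^ 2 * R p)"

lemma half_corner_map_minus_id:
  "half_corner_map c \<beta> P Q R p - p = csc (pz p ^ c) (half_corner_field \<beta> P Q R p)"
  by (simp add: half_corner_map_def half_corner_field_def csc_def prod_eq_iff power_add
      power2_eq_square algebra_simps)

lemma hgerm_map_half_corner_field:
  "hgerm P \<Longrightarrow> hgerm Q \<Longrightarrow> hgerm R \<Longrightarrow> hgerm_map (half_corner_field \<beta> P Q R)"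
  by (simp add: hgerm_map_def half_corner_field_def hgerm_intros)

lemma zero_if_zero_off_hyperplane:
  fixes H :: "c3 \<Rightarrow> complex"
  assumes "isCont H p" "eventually (\<lambda>q. pz q \<noteq> 0 \<longrightarrow> H q = 0) (nhds p)"
  shows "H p = 0"
proof -
  define m where "m s = p + (0, 0, s)" for s :: complex
  have m_cont: "isCont m 0"
    unfolding m_def by (intro continuous_intros)
  have m_0: "m 0 = p"
    by (simp add: m_def zero_prod_def)
  have "eventually (\<lambda>s. pz p + s \<noteq> 0) (at 0)"
  proof (cases "pz p = 0")
    case False
    then show ?thesis
      using t1_space_nhds[of 0 "- pz p"] by (auto simp: eventually_at_filter add_eq_0_iff elim: eventually_mono)
  qed (simp add: eventually_at_filter)
  moreover have "eventually (\<lambda>s. pz (m s) \<noteq> 0 \<longrightarrow> H (m s) = 0) (nhds 0)"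
    using eventually_nhds_compose[OF m_cont] assms(2) m_0 by simp
  then have "eventually (\<lambda>s. pz (m s) \<noteq> 0 \<longrightarrow> H (m s) = 0) (at 0)"
    unfolding eventually_at_filter by (auto elim: eventually_mono)
  ultimately have "eventually (\<lambda>s. H (m s) = 0) (at 0)"
    by eventually_elim (simp add: m_def)
  then have "((\<lambda>s. H (m s)) \<longlongrightarrow> 0) (at 0)"
    by (rule tendsto_eventually)
  moreover have "((\<lambda>s. H (m s)) \<longlongrightarrow> H p) (at 0)"
    using isCont_o2[OF m_cont] assms(1) m_0 by (simp add: isCont_def)
  ultimately show ?thesis
    by (simp add: LIM_unique)
qed

lemma eventually_zero_cancel_pz_power:
  assumes "hgerm H" "eventually (\<lambda>p. pz p ^ c * H p = 0) (nhds 0)"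
  shows "eventually (\<lambda>p. H p = 0) (nhds 0)"
proof -
  have "eventually (isCont H) (nhds 0)"
    using assms(1) cdifferentiable_at_isCont unfolding hgerm_iff_eventually by (blast intro: eventually_mono)
  moreover have "eventually (\<lambda>p. eventually (\<lambda>q. pz q \<noteq> 0 \<longrightarrow> H q = 0) (nhds p)) (nhds 0)"
    using assms(2) unfolding eventually_eventually by (rule eventually_mono) auto
  ultimately show ?thesis
    by eventually_elim (rule zero_if_zero_off_hyperplane)
qed

lemma half_corner_field_unique:
  assumes "hgerm_map G" "hgerm_map G'"
    "eventually (\<lambda>p. csc (pz p ^ c) (G p) = csc (pz p ^ c) (G' p)) (nhds 0)"
  shows "eventually (\<lambda>p. G p = G' p) (nhds 0)"
proof -
  have component: "eventually (\<lambda>p. d (G p) - d (G' p) = 0) (nhds 0)" if "d \<in> {px, py, pz}" for d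
  proof (rule eventually_zero_cancel_pz_power[where c=c])
    show "hgerm (\<lambda>p. d (G p) - d (G' p))"
      using assms(1,2) that by (auto simp: hgerm_map_def intro: hgerm_diff)
    show "eventually (\<lambda>p. pz p ^ c * (d (G p) - d (G' p)) = 0) (nhds 0)"
      using assms(3) that by (auto simp: csc_def right_diff_distrib elim: eventually_mono)
  qed
  have "eventually (\<lambda>p. px (G p) - px (G' p) = 0 \<and> py (G p) - py (G' p) = 0 \<and> pz (G p) - pz (G' p) = 0) (nhds 0)"
    using component[of px] component[of py] component[of pz] by (simp add: eventually_conj_iff)
  then show ?thesis
    by (rule eventually_mono) (simp add: prod_eq_iff)
qed

lemma hom_part_eventually_eq:
  assumes "eventually (\<lambda>p. g p = h p) (nhds 0)"
  shows "hom_part k g v = hom_part k h v"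
proof -
  have "isCont (\<lambda>t. csc t v) 0"
    unfolding csc_def by (intro continuous_intros)
  then have "eventually (\<lambda>t. g (csc t v) = h (csc t v)) (nhds 0)"
    using eventually_nhds_compose assms by fastforce
  then show ?thesis
    unfolding hom_part_def by (metis higher_deriv_cong_ev)
qed

lemma lowest_hom_eventually_eq:
  assumes "eventually (\<lambda>p. G p = G' p) (nhds 0)"
  shows "lowest_hom G = lowest_hom G'"
proof -
  have "eventually (\<lambda>p. px (G p) = px (G' p)) (nhds 0)" "eventually (\<lambda>p. py (G p) = py (G' p)) (nhds 0)"
    "eventually (\<lambda>p. pz (G p) = pz (G' p)) (nhds 0)"
    using assms by (auto elim: eventually_mono)
  from this[THEN hom_part_eventually_eq] have "hom_part_map k G = hom_part_map k G'" for k
    unfolding hom_part_map_def by simp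
  then show ?thesis
    unfolding lowest_hom_def by presburger
qed

lemma hgerm_line_has_derivative:
  assumes "hgerm g" obtains d where "((\<lambda>t. g (csc t v)) has_field_derivative d) (at 0)"
proof -
  have "cdifferentiable_at g (csc 0 v)"
    using eventually_nhds_x_imp_x assms unfolding hgerm_iff_eventually by simp
  then show thesis
    using that line_has_field_derivative unfolding cdifferentiable_at_def by blast
qed

lemma in_m2_line_derivative:
  assumes "in_m2 P" shows "((\<lambda>t. P (csc t w)) has_field_derivative 0) (at 0)"
proof -
  obtain n :: nat and a b where ab: "\<And>i. i < n \<Longrightarrow> in_m (a i) \<and> in_m (b i)"
    and P: "eventually (\<lambda>p. P p = (\<Sum>i<n. a i p * b i p)) (nhds 0)"
    using in_m2E[OF assms] by blast
  have "isCont (\<lambda>t. csc t w) 0"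
    unfolding csc_def by (intro continuous_intros)
  then have P_line: "eventually (\<lambda>t. P (csc t w) = (\<Sum>i<n. a i (csc t w) * b i (csc t w))) (nhds 0)"
    using eventually_nhds_compose P by fastforce
  have "((\<lambda>t. a i (csc t w) * b i (csc t w)) has_field_derivative 0) (at 0)" if i: "i < n" for i
  proof -
    obtain da db where "((\<lambda>t. a i (csc t w)) has_field_derivative da) (at 0)"
        "((\<lambda>t. b i (csc t w)) has_field_derivative db) (at 0)"
      using ab[OF i] hgerm_line_has_derivative unfolding in_m_def by metis
    from DERIV_mult[OF this] show ?thesis
      using ab[OF i] by (simp add: in_m_def)
  qed
  then have "((\<lambda>t. \<Sum>i<n. a i (csc t w) * b i (csc t w)) has_field_derivative 0) (at 0)"
    using DERIV_sum[of "{..<n}"] by fastforce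
  then show ?thesis
    using DERIV_cong_ev[OF refl P_line refl] by simp
qed

lemma hom_part_map_half_corner_field:
  assumes "in_m2 P" "in_m Q" "hgerm R"
  shows "hom_part_map 0 (half_corner_field \<beta> P Q R) w = 0"
    and "hom_part_map 1 (half_corner_field \<beta> P Q R) w = (px w, \<beta> * pz w, 0)"
proof -
  show "hom_part_map 0 (half_corner_field \<beta> P Q R) w = 0"
    using in_m2_zero[OF assms(1)] by (simp add: hom_part_map_def hom_part_def half_corner_field_def zero_prod_def)
  have Q0: "Q 0 = 0" and "hgerm Q" using assms(2) by (auto simp: in_m_def)
  obtain dq where dq: "((\<lambda>t. Q (csc t w)) has_field_derivative dq) (at 0)"
    using hgerm_line_has_derivative[OF \<open>hgerm Q\<close>] .
  obtain dr where dr: "((\<lambda>t. R (csc t w)) has_field_derivative dr) (at 0)"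
    using hgerm_line_has_derivative[OF assms(3)] .
  have lin: "((\<lambda>t. t * k) has_field_derivative k) (at 0)" for k
    by (auto intro!: derivative_eq_intros)
  have "((\<lambda>t. t * px w + P (csc t w)) has_field_derivative px w + 0) (at 0)"
    by (intro DERIV_add lin in_m2_line_derivative[OF assms(1)])
  moreover have "((\<lambda>t. (t * pz w) * (\<beta> + Q (csc t w))) has_field_derivative
      pz w * (\<beta> + Q (csc 0 w)) + (0 + dq) * (0 * pz w)) (at 0)"
    by (intro DERIV_mult DERIV_add DERIV_const lin dq)
  moreover have "((\<lambda>t. ((t * pz w) * (t * pz w)) * R (csc t w)) has_field_derivative
      (pz w * (0 * pz w) + pz w * (0 * pz w)) * R (csc 0 w) + dr * ((0 * pz w) * (0 * pz w))) (at 0)"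
    by (intro DERIV_mult lin dr)
  ultimately show "hom_part_map 1 (half_corner_field \<beta> P Q R) w = (px w, \<beta> * pz w, 0)"
    using Q0 by (simp add: hom_part_map_def hom_part_def half_corner_field_def DERIV_imp_deriv
        power2_eq_square mult.commute)
qed

lemma lowest_hom_half_corner_field:
  assumes "in_m2 P" "in_m Q" "hgerm R"
  shows "lowest_hom (half_corner_field \<beta> P Q R) w = (px w, \<beta> * pz w, 0)"
proof -
  note hom = hom_part_map_half_corner_field[OF assms]
  have "(LEAST k. \<exists>w. hom_part_map k (half_corner_field \<beta> P Q R) w \<noteq> 0) = 1"
  proof (rule Least_equality)
    have "hom_part_map 1 (half_corner_field \<beta> P Q R) (1, 0, 0) \<noteq> 0"
      unfolding hom(2) by (simp add: zero_prod_def)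
    then show "\<exists>w. hom_part_map 1 (half_corner_field \<beta> P Q R) w \<noteq> 0" by blast
  next
    fix k assume "\<exists>w. hom_part_map k (half_corner_field \<beta> P Q R) w \<noteq> 0"
    then show "1 \<le> k" using hom(1) by (cases k) auto
  qed
  then show ?thesis
    unfolding lowest_hom_def using hom(2) by simp
qed

lemma singular_dir_half_corner_iff:
  assumes "half_corner_form c \<beta> P Q R f"
  shows "singular_dir f c v lam \<longleftrightarrow> v \<noteq> 0 \<and> (px v, \<beta> * pz v, 0) = csc lam v"
proof -
  have P: "in_m2 P" and Q: "in_m Q" and R: "hgerm R"
    and f: "eventually (\<lambda>p. f p = half_corner_map c \<beta> P Q R p) (nhds 0)"
    using assms by (simp_all add: half_corner_form_iff)
  let ?G = "half_corner_field \<beta> P Q R"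
  have G: "hgerm_map ?G"
    using hgerm_map_half_corner_field[OF in_m2_hgerm[OF P] _ R] Q by (simp add: in_m_def)
  have f_G: "eventually (\<lambda>p. f p - p = csc (pz p ^ c) (?G p)) (nhds 0)"
    using f by (rule eventually_mono) (simp add: half_corner_map_minus_id)
  have lowest_G: "lowest_hom G' = lowest_hom ?G"
    if "hgerm_map G'" "eventually (\<lambda>p. f p - p = csc (pz p ^ c) (G' p)) (nhds 0)" for G'
  proof (rule lowest_hom_eventually_eq, rule half_corner_field_unique[OF that(1) G])
    show "eventually (\<lambda>p. csc (pz p ^ c) (G' p) = csc (pz p ^ c) (?G p)) (nhds 0)"
      using that(2) f_G by eventually_elim simp
  qed
  show ?thesis
  proof
    assume "singular_dir f c v lam"
    then obtain G' where "v \<noteq> 0" "hgerm_map G'" "eventually (\<lambda>p. f p - p = csc (pz p ^ c) (G' p)) (nhds 0)"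
      "lowest_hom G' v = csc lam v"
      unfolding singular_dir_def by blast
    then show "v \<noteq> 0 \<and> (px v, \<beta> * pz v, 0) = csc lam v"
      using lowest_G lowest_hom_half_corner_field[OF P Q R] by simp
  next
    assume "v \<noteq> 0 \<and> (px v, \<beta> * pz v, 0) = csc lam v"
    then show "singular_dir f c v lam"
      unfolding singular_dir_def using G f_G lowest_hom_half_corner_field[OF P Q R]
      by (intro conjI exI[of _ ?G]) auto
  qed
qed

lemma mem_cline: "v \<in> cline w \<longleftrightarrow> (\<exists>t. t \<noteq> 0 \<and> v = csc t w)"
  by (auto simp: cline_def)

lemma half_corner_eigendirections:
  "(\<exists>lam. v \<noteq> 0 \<and> (px v, \<beta> * pz v, 0) = csc lam v) \<longleftrightarrow>
     v \<in> cline (1, 0, 0) \<union> cline (0, 1, 0) \<union> {v. \<beta> = 0 \<and> (\<exists>y0. v \<in> cline (0, y0, 1))}"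
proof (cases v)
  case (fields x y z)
  have "(\<exists>lam. v \<noteq> 0 \<and> (px v, \<beta> * pz v, 0) = csc lam v) \<longleftrightarrow>
      \<not> (x = 0 \<and> y = 0 \<and> z = 0) \<and> (\<exists>lam. x = lam * x \<and> \<beta> * z = lam * y \<and> lam * z = 0)"
    by (auto simp: fields csc_def zero_prod_def)
  also have "\<dots> \<longleftrightarrow> (x \<noteq> 0 \<and> y = 0 \<and> z = 0) \<or> (x = 0 \<and> y \<noteq> 0 \<and> z = 0) \<or> (x = 0 \<and> z \<noteq> 0 \<and> \<beta> = 0)"
  proof
    assume "\<not> (x = 0 \<and> y = 0 \<and> z = 0) \<and> (\<exists>lam. x = lam * x \<and> \<beta> * z = lam * y \<and> lam * z = 0)"
    then obtain lam where "\<not> (x = 0 \<and> y = 0 \<and> z = 0)" "x = lam * x" "\<beta> * z = lam * y" "lam * z = 0"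
      by blast
    then show "(x \<noteq> 0 \<and> y = 0 \<and> z = 0) \<or> (x = 0 \<and> y \<noteq> 0 \<and> z = 0) \<or> (x = 0 \<and> z \<noteq> 0 \<and> \<beta> = 0)"
      by (cases "lam = 0"; cases "x = 0") auto
  qed (auto intro: exI[of _ 0] exI[of _ 1])
  also have "\<dots> \<longleftrightarrow> v \<in> cline (1, 0, 0) \<union> cline (0, 1, 0) \<union> {v. \<beta> = 0 \<and> (\<exists>y0. v \<in> cline (0, y0, 1))}"
    by (auto simp: fields mem_cline csc_def intro: exI[of _ "y / z"])
  finally show ?thesis .
qed

lemma half_corner_singular_dirs:
  assumes "half_corner_form c \<beta> P Q R f"
  shows "{v. \<exists>lam. singular_dir f c v lam} =
    cline (1, 0, 0) \<union> cline (0, 1, 0) \<union> {v. \<beta> = 0 \<and> (\<exists>y0. v \<in> cline (0, y0, 1))}"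
  using half_corner_eigendirections[of _ \<beta>] by (auto simp: singular_dir_half_corner_iff[OF assms])

lemma half_corner_degenerate_dirs:
  assumes "half_corner_form c 0 P Q R f"
  shows "\<not> exceptional_dir (0, y0, 1) \<and> degenerate_dir f c (0, y0, 1)"
  by (simp add: exceptional_dir_def degenerate_dir_def singular_dir_half_corner_iff[OF assms] zero_prod_def)

subsection \<open>Lifts of a half corner to the blow-up\<close>

lemma conj_to_coordinate_change:
  assumes "loc_biholo \<phi> \<psi>" "\<And>p. \<psi> (\<phi> p) = p"
  shows "conj_to g (\<lambda>p. \<phi> (g (\<psi> p)))"
  unfolding conj_to_def using assms by (intro exI[of _ \<phi>] exI[of _ \<psi>]) simp

lemma loc_biholoI:
  assumes "hgerm_map \<phi>" "hgerm_map \<psi>" "\<phi> 0 = 0" "\<And>p. \<psi> (\<phi> p) = p" "\<And>q. \<phi> (\<psi> q) = q"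
  shows "loc_biholo \<phi> \<psi>"
  using assms assms(4)[of 0] by (simp add: loc_biholo_def)

definition swap23 :: "c3 \<Rightarrow> c3" where "swap23 p = (px p, pz p, py p)"

definition shear :: "complex \<Rightarrow> complex \<Rightarrow> c3 \<Rightarrow> c3" where
  "shear a b p = (px p + a * py p + b * pz p, py p, pz p)"

lemma swap23_simps [simp]: "swap23 (x, y, z) = (x, z, y)" "swap23 (swap23 p) = p" "swap23 0 = 0"
  by (simp_all add: swap23_def zero_prod_def)

lemma shear_simps [simp]: "shear a b (x, y, z) = (x + a * y + b * z, y, z)"
  "shear (- a) (- b) (shear a b p) = p" "shear a b (shear (- a) (- b) p) = p" "shear a b 0 = 0"
  by (simp_all add: shear_def algebra_simps zero_prod_def)

lemma hgerm_map_swap23: "hgerm_map swap23"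
  by (simp add: hgerm_map_def swap23_def hgerm_intros)

lemma hgerm_map_shear: "hgerm_map (shear a b)"
  by (simp add: hgerm_map_def shear_def hgerm_intros)

lemma loc_biholo_swap23: "loc_biholo swap23 swap23"
  by (rule loc_biholoI) (simp_all add: hgerm_map_swap23)

lemma loc_biholo_shear: "loc_biholo (shear a b) (shear (- a) (- b))"
  by (rule loc_biholoI) (simp_all add: hgerm_map_shear)

lemma lift_chart1I:
  assumes "hgerm_map g"
    and "eventually (\<lambda>p. f (blowup1 p) = csc (px p) (D p, U p, V p) \<and> D p \<noteq> 0) (nhds 0)"
    and "\<And>p. g p = (px p * D p, U p / D p, V p / D p)"
  shows "lift_chart1 f g"
proof -
  have "eventually (\<lambda>p. px p \<noteq> 0 \<longrightarrow> (let q = f (px p, px p * py p, px p * pz p) in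
      px q \<noteq> 0 \<and> g p = (px q, py q / px q, pz q / px q))) (nhds 0)"
    using assms(2) by (rule eventually_mono) (auto simp: blowup1_def assms(3) csc_def Let_def)
  with assms(1) show ?thesis
    by (simp add: lift_chart1_def case_prod_unfold)
qed

(* E stands for x Ph, where the pullback of P along blowup1 is x^2 Ph. *)
definition half_corner_lift1 ::
  "nat \<Rightarrow> complex \<Rightarrow> (c3 \<Rightarrow> complex) \<Rightarrow> (c3 \<Rightarrow> complex) \<Rightarrow> (c3 \<Rightarrow> complex) \<Rightarrow> c3 \<Rightarrow> c3" where
  "half_corner_lift1 c \<beta> E Q R p =
     (let D = 1 + px p ^ c * pz p ^ c * (1 + E p)
      in (px p * D, (py p + px p ^ c * pz p ^ (c + 1) * (\<beta> + Q p)) / D,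
          pz p * (1 + px p ^ (c + 1) * pz p ^ (c + 1) * R p) / D))"

lemma lift_chart1_half_corner:
  assumes "half_corner_form c \<beta> P Q R f"
  obtains E Q1 R1 where "in_m E" "hgerm Q1" "hgerm R1" "lift_chart1 f (half_corner_lift1 c \<beta> E Q1 R1)"
proof -
  have "0 < c" and P: "in_m2 P" and "in_m Q" "hgerm R"
    and f: "eventually (\<lambda>p. f p = half_corner_map c \<beta> P Q R p) (nhds 0)"
    using assms by (simp_all add: half_corner_form_iff)
  obtain Ph where "hgerm Ph" and Ph: "eventually (\<lambda>p. P (blowup1 p) = px p ^ 2 * Ph p) (nhds 0)"
    using in_m2_pullback[OF P pullbacks_divisible_blowup1 hgerm_map_isCont[OF hgerm_map_blowup(1)]] by auto
  define E where "E p = px p * Ph p" for p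
  define Q1 where "Q1 p = Q (blowup1 p)" for p
  define R1 where "R1 p = R (blowup1 p)" for p
  define D where "D p = 1 + px p ^ c * pz p ^ c * (1 + E p)" for p
  have "hgerm E" "hgerm Q1" "hgerm R1"
    using \<open>hgerm Ph\<close> \<open>in_m Q\<close> \<open>hgerm R\<close> unfolding E_def Q1_def R1_def in_m_def
    by (auto intro: hgerm_intros hgerm_pullback hgerm_map_blowup)
  then have "hgerm D"
    unfolding D_def by (intro hgerm_intros)
  have "D 0 = 1"
    using \<open>0 < c\<close> by (simp add: D_def)
  have D_nz: "eventually (\<lambda>p. D p \<noteq> 0) (nhds 0)"
    using hgerm_eventually_nonzero[OF \<open>hgerm D\<close>] \<open>D 0 = 1\<close> by simp
  have "hgerm_map (half_corner_lift1 c \<beta> E Q1 R1)"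
    unfolding hgerm_map_def half_corner_lift1_def Let_def D_def[symmetric]
    using \<open>hgerm D\<close> \<open>D 0 = 1\<close> \<open>hgerm Q1\<close> \<open>hgerm R1\<close> by (auto intro!: hgerm_intros hgerm_divide)
  moreover have "eventually (\<lambda>p. f (blowup1 p) = csc (px p) (D p,
      py p + px p ^ c * pz p ^ (c + 1) * (\<beta> + Q1 p), pz p * (1 + px p ^ (c + 1) * pz p ^ (c + 1) * R1 p))
      \<and> D p \<noteq> 0) (nhds 0)"
    using eventually_pullback[OF hgerm_map_blowup(1) blowup_simps(4) f] Ph D_nz
    by eventually_elim (simp add: half_corner_map_def blowup1_def D_def E_def Q1_def R1_def csc_def
        power_mult_distrib power2_eq_square algebra_simps)
  ultimately have "lift_chart1 f (half_corner_lift1 c \<beta> E Q1 R1)"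
    by (rule lift_chart1I) (simp add: half_corner_lift1_def D_def Let_def)
  moreover have "in_m E" using \<open>hgerm E\<close> by (simp add: in_m_def E_def)
  ultimately show thesis using that \<open>hgerm Q1\<close> \<open>hgerm R1\<close> by blast
qed

lemma simple_corner_formI:
  assumes "0 < a" "0 < b" "lam \<noteq> 0" "\<not> (\<exists>q::rat. q > 0 \<and> mu = lam * of_rat q)" "in_m P" "in_m Q" "in_m R"
    "eventually (\<lambda>p. h p = (px p + px p ^ a * py p ^ b * (px p * (lam + P p)),
       py p + px p ^ a * py p ^ b * (py p * (mu + Q p)), pz p + px p ^ a * py p ^ b * R p)) (nhds 0)"
  shows "simple_corner_form a b 0 lam mu P Q R h"
  using assms by (simp add: simple_corner_form_def case_prod_unfold)

lemma minus_one_not_positive_rational: "\<not> (\<exists>q::rat. q > 0 \<and> (-1::complex) = 1 * of_rat q)"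
proof
  assume "\<exists>q::rat. q > 0 \<and> (-1::complex) = 1 * of_rat q"
  then obtain q :: rat where "q > 0" "of_rat q = (of_rat (-1) :: complex)" by auto
  then have "q = -1" "q > 0" by (simp_all only: of_rat_eq_iff)
  then show False by simp
qed

lemma is_simple_corner_half_corner_lift1:
  assumes "0 < c" "in_m E" "hgerm Q" "hgerm R"
  shows "is_simple_corner (half_corner_lift1 c \<beta> E Q R)"
proof -
  let ?g = "half_corner_lift1 c \<beta> E Q R"
  define Es where "Es p = E (swap23 p)" for p
  define D where "D p = 1 + px p ^ c * py p ^ c * (1 + Es p)" for p
  define Q' where "Q' p = (px p * py p * R (swap23 p) - Es p + px p ^ c * py p ^ c * (1 + Es p)) / D p" for p
  define R' where "R' p = (py p * (\<beta> + Q (swap23 p)) - pz p * (1 + Es p)) / D p" for p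
  have "hgerm Es"
    unfolding Es_def by (rule hgerm_pullback[OF _ hgerm_map_swap23]) (use assms(2) in \<open>simp_all add: in_m_def\<close>)
  have "Es 0 = 0"
    using assms(2) by (simp add: Es_def in_m_def)
  have "hgerm (\<lambda>p. Q (swap23 p))" "hgerm (\<lambda>p. R (swap23 p))"
    using assms(3,4) hgerm_pullback[OF _ hgerm_map_swap23] by simp_all
  have "hgerm D" "D 0 = 1"
    unfolding D_def using \<open>hgerm Es\<close> \<open>0 < c\<close> by (auto intro!: hgerm_intros)
  have "in_m Q'" "in_m R'"
    unfolding in_m_def Q'_def R'_def using \<open>hgerm Es\<close> \<open>Es 0 = 0\<close> \<open>hgerm D\<close> \<open>D 0 = 1\<close> \<open>0 < c\<close>
      \<open>hgerm (\<lambda>p. Q (swap23 p))\<close> \<open>hgerm (\<lambda>p. R (swap23 p))\<close>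
    by (auto intro!: hgerm_intros hgerm_divide simp: zero_prod_def)
  have "eventually (\<lambda>p. D p \<noteq> 0) (nhds 0)"
    using hgerm_eventually_nonzero[OF \<open>hgerm D\<close>] \<open>D 0 = 1\<close> by simp
  then have "eventually (\<lambda>p. swap23 (?g (swap23 p)) =
      (px p + px p ^ c * py p ^ c * (px p * (1 + Es p)), py p + px p ^ c * py p ^ c * (py p * (- 1 + Q' p)),
       pz p + px p ^ c * py p ^ c * R' p)) (nhds 0)"
    by (rule eventually_mono)
       (simp add: half_corner_lift1_def swap23_def Let_def Q'_def R'_def D_def Es_def field_simps)
  then have "simple_corner_form c c 0 1 (- 1) Es Q' R' (\<lambda>p. swap23 (?g (swap23 p)))"
    using \<open>0 < c\<close> minus_one_not_positive_rational \<open>in_m Q'\<close> \<open>in_m R'\<close> \<open>hgerm Es\<close> \<open>Es 0 = 0\<close>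
    by (intro simple_corner_formI) (simp_all add: in_m_def)
  moreover have "conj_to ?g (\<lambda>p. swap23 (?g (swap23 p)))"
    by (rule conj_to_coordinate_change[OF loc_biholo_swap23]) simp
  ultimately show ?thesis
    unfolding is_simple_corner_def by blast
qed

lemma lift_chart2I:
  assumes "hgerm_map g"
    and "eventually (\<lambda>p. f (blowup2 p) = csc (py p) (U p, D p, V p) \<and> D p \<noteq> 0) (nhds 0)"
    and "\<And>p. g p = (U p / D p, py p * D p, V p / D p)"
  shows "lift_chart2 f g"
proof -
  have "eventually (\<lambda>p. py p \<noteq> 0 \<longrightarrow> (let q = f (px p * py p, py p, pz p * py p) in
      py q \<noteq> 0 \<and> g p = (px q / py q, py q, pz q / py q))) (nhds 0)"
    using assms(2) by (rule eventually_mono) (auto simp: blowup2_def assms(3) csc_def Let_def)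
  with assms(1) show ?thesis
    by (simp add: lift_chart2_def case_prod_unfold)
qed

definition half_corner_lift2 ::
  "nat \<Rightarrow> complex \<Rightarrow> (c3 \<Rightarrow> complex) \<Rightarrow> (c3 \<Rightarrow> complex) \<Rightarrow> (c3 \<Rightarrow> complex) \<Rightarrow> c3 \<Rightarrow> c3" where
  "half_corner_lift2 c \<beta> Ph Q R p =
     (let D = 1 + pz p ^ (c + 1) * py p ^ c * (\<beta> + Q p)
      in ((px p + pz p ^ c * py p ^ c * (px p + py p * Ph p)) / D, py p * D,
          pz p * (1 + pz p ^ (c + 1) * py p ^ (c + 1) * R p) / D))"

lemma lift_chart2_half_corner:
  assumes "half_corner_form c \<beta> P Q R f"
  obtains Ph Q2 R2 where "hgerm Ph" "hgerm Q2" "hgerm R2" "lift_chart2 f (half_corner_lift2 c \<beta> Ph Q2 R2)"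
proof -
  have "0 < c" and P: "in_m2 P" and "in_m Q" "hgerm R"
    and f: "eventually (\<lambda>p. f p = half_corner_map c \<beta> P Q R p) (nhds 0)"
    using assms by (simp_all add: half_corner_form_iff)
  obtain Ph where "hgerm Ph" and Ph: "eventually (\<lambda>p. P (blowup2 p) = py p ^ 2 * Ph p) (nhds 0)"
    using in_m2_pullback[OF P pullbacks_divisible_blowup2 hgerm_map_isCont[OF hgerm_map_blowup(2)]] by auto
  define Q2 where "Q2 p = Q (blowup2 p)" for p
  define R2 where "R2 p = R (blowup2 p)" for p
  define D where "D p = 1 + pz p ^ (c + 1) * py p ^ c * (\<beta> + Q2 p)" for p
  have "hgerm Q2" "hgerm R2"
    using \<open>in_m Q\<close> \<open>hgerm R\<close> unfolding Q2_def R2_def in_m_def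
    by (auto intro: hgerm_pullback hgerm_map_blowup)
  then have "hgerm D"
    unfolding D_def by (intro hgerm_intros)
  have "D 0 = 1"
    by (simp add: D_def)
  have D_nz: "eventually (\<lambda>p. D p \<noteq> 0) (nhds 0)"
    using hgerm_eventually_nonzero[OF \<open>hgerm D\<close>] \<open>D 0 = 1\<close> by simp
  have "hgerm_map (half_corner_lift2 c \<beta> Ph Q2 R2)"
    unfolding hgerm_map_def half_corner_lift2_def Let_def D_def[symmetric]
    using \<open>hgerm D\<close> \<open>D 0 = 1\<close> \<open>hgerm Ph\<close> \<open>hgerm R2\<close> by (auto intro!: hgerm_intros hgerm_divide)
  moreover have "eventually (\<lambda>p. f (blowup2 p) = csc (py p) (px p + pz p ^ c * py p ^ c * (px p + py p * Ph p),
      D p, pz p * (1 + pz p ^ (c + 1) * py p ^ (c + 1) * R2 p)) \<and> D p \<noteq> 0) (nhds 0)"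
    using eventually_pullback[OF hgerm_map_blowup(2) blowup_simps(5) f] Ph D_nz
    by eventually_elim (simp add: half_corner_map_def blowup2_def D_def Q2_def R2_def csc_def
        power_mult_distrib power2_eq_square algebra_simps)
  ultimately have "lift_chart2 f (half_corner_lift2 c \<beta> Ph Q2 R2)"
    by (rule lift_chart2I) (simp add: half_corner_lift2_def D_def Let_def)
  then show thesis using that \<open>hgerm Ph\<close> \<open>hgerm Q2\<close> \<open>hgerm R2\<close> by blast
qed

lemma spinning_corner_formI:
  assumes "0 < b" "0 < c" "in_m2 P" "in_m Q" "in_m R"
    "eventually (\<lambda>p. h p = (px p + py p ^ b * pz p ^ c * (px p + P p),
       py p + py p ^ (b + 1) * pz p ^ c * Q p, pz p + py p ^ b * pz p ^ (c + 1) * R p)) (nhds 0)"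
  shows "spinning_corner_form b c P Q R h"
  using assms by (simp add: spinning_corner_form_def case_prod_unfold)

lemma is_spinning_corner_half_corner_lift2:
  assumes "0 < c" "hgerm Ph" "hgerm Q" "hgerm R"
  shows "is_spinning_corner (half_corner_lift2 c \<beta> Ph Q R)"
proof -
  let ?g = "half_corner_lift2 c \<beta> Ph Q R"
  \<comment> \<open>The shear by \<open>\<alpha>\<close> makes the coefficient \<open>Ph - \<alpha>\<close> vanish at 0, which puts \<open>P'\<close> into \<open>m\<^sup>2\<close>.\<close>
  define \<alpha> where "\<alpha> = Ph 0"
  let ?\<psi> = "shear (- \<alpha>) 0"
  define D where "D p = 1 + pz p ^ (c + 1) * py p ^ c * (\<beta> + Q (?\<psi> p))" for p
  define P' where "P' p = inverse (D p) * (py p * (Ph (?\<psi> p) - \<alpha>) + pz p * ((\<beta> + Q (?\<psi> p)) *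
      (- (px p - \<alpha> * py p) + \<alpha> * py p * D p - px p * py p ^ c * pz p ^ c)))" for p
  define Q' where "Q' p = pz p * (\<beta> + Q (?\<psi> p))" for p
  define R' where "R' p = pz p * (py p * R (?\<psi> p) - \<beta> - Q (?\<psi> p)) / D p" for p
  have pull: "hgerm (\<lambda>p. Ph (?\<psi> p))" "hgerm (\<lambda>p. Q (?\<psi> p))" "hgerm (\<lambda>p. R (?\<psi> p))"
    using assms(2-4) hgerm_pullback[OF _ hgerm_map_shear] by simp_all
  then have "hgerm D"
    unfolding D_def by (intro hgerm_intros)
  have "D 0 = 1" "Ph (?\<psi> 0) = \<alpha>"
    by (simp_all add: D_def \<alpha>_def)
  have "in_m Q'" "in_m R'"
    unfolding in_m_def Q'_def R'_def using pull \<open>hgerm D\<close> \<open>D 0 = 1\<close>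
    by (auto intro!: hgerm_intros hgerm_divide simp: zero_prod_def)
  have "in_m (\<lambda>p. Ph (?\<psi> p) - \<alpha>)" "in_m (\<lambda>p. (\<beta> + Q (?\<psi> p)) *
      (- (px p - \<alpha> * py p) + \<alpha> * py p * D p - px p * py p ^ c * pz p ^ c))"
    using pull \<open>hgerm D\<close> \<open>Ph (?\<psi> 0) = \<alpha>\<close> \<open>0 < c\<close> by (auto intro!: in_mI hgerm_intros simp: zero_prod_def)
  from in_m2_add[OF in_m2_mult[OF in_m_coordinates(2) this(1)] in_m2_mult[OF in_m_coordinates(3) this(2)]]
  have "in_m2 P'"
    unfolding P'_def using hgerm_inverse[OF \<open>hgerm D\<close>] \<open>D 0 = 1\<close> by (intro in_m2_hgerm_mult) simp_all
  have "eventually (\<lambda>p. D p \<noteq> 0) (nhds 0)"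
    using hgerm_eventually_nonzero[OF \<open>hgerm D\<close>] \<open>D 0 = 1\<close> by simp
  then have "eventually (\<lambda>p. shear \<alpha> 0 (?g (?\<psi> p)) =
      (px p + py p ^ c * pz p ^ c * (px p + P' p), py p + py p ^ (c + 1) * pz p ^ c * Q' p,
       pz p + py p ^ c * pz p ^ (c + 1) * R' p)) (nhds 0)"
    by (rule eventually_mono)
       (simp add: half_corner_lift2_def shear_def Let_def P'_def Q'_def R'_def D_def field_simps)
  then have "spinning_corner_form c c P' Q' R' (\<lambda>p. shear \<alpha> 0 (?g (?\<psi> p)))"
    using \<open>0 < c\<close> \<open>in_m2 P'\<close> \<open>in_m Q'\<close> \<open>in_m R'\<close> by (intro spinning_corner_formI)
  moreover have "conj_to ?g (\<lambda>p. shear \<alpha> 0 (?g (?\<psi> p)))"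
    by (rule conj_to_coordinate_change[OF loc_biholo_shear[of \<alpha> 0, simplified]]) (simp add: shear_def)
  ultimately show ?thesis
    unfolding is_spinning_corner_def by blast
qed

lemma lift_chart3I:
  assumes "hgerm_map g"
    and "eventually (\<lambda>p. f (blowup3 y0 p) = csc (pz p) (U p, V p, D p) \<and> D p \<noteq> 0) (nhds 0)"
    and "\<And>p. g p = (U p / D p, V p / D p - y0, pz p * D p)"
  shows "lift_chart3 y0 f g"
proof -
  have "eventually (\<lambda>p. pz p \<noteq> 0 \<longrightarrow> (let q = f (px p * pz p, (py p + y0) * pz p, pz p) in
      pz q \<noteq> 0 \<and> g p = (px q / pz q, py q / pz q - y0, pz q))) (nhds 0)"
    using assms(2) by (rule eventually_mono) (auto simp: blowup3_def assms(3) csc_def Let_def)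
  with assms(1) show ?thesis
    by (simp add: lift_chart3_def case_prod_unfold)
qed

definition half_corner_lift3 ::
  "nat \<Rightarrow> complex \<Rightarrow> (c3 \<Rightarrow> complex) \<Rightarrow> (c3 \<Rightarrow> complex) \<Rightarrow> (c3 \<Rightarrow> complex) \<Rightarrow> c3 \<Rightarrow> c3" where
  "half_corner_lift3 c y0 Ph Qh R p =
     (let D = 1 + pz p ^ (c + 1) * R p
      in ((px p + pz p ^ c * (px p + pz p * Ph p)) / D, (py p + y0 + pz p ^ (c + 1) * Qh p) / D - y0,
          pz p * D))"

lemma lift_chart3_half_corner:
  assumes "half_corner_form c 0 P Q R f"
  obtains Ph Qh R3 where "hgerm Ph" "hgerm Qh" "hgerm R3" "lift_chart3 y0 f (half_corner_lift3 c y0 Ph Qh R3)"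
proof -
  have "0 < c" and P: "in_m2 P" and "in_m Q" "hgerm R"
    and f: "eventually (\<lambda>p. f p = half_corner_map c 0 P Q R p) (nhds 0)"
    using assms by (simp_all add: half_corner_form_iff)
  obtain Ph where "hgerm Ph" and Ph: "eventually (\<lambda>p. P (blowup3 y0 p) = pz p ^ 2 * Ph p) (nhds 0)"
    using in_m2_pullback[OF P pullbacks_divisible_blowup3 hgerm_map_isCont[OF hgerm_map_blowup(3)]] by auto
  obtain Qh where "hgerm Qh" and Qh: "\<And>p. Q (blowup3 y0 p) = pz p * Qh p"
    using pullbacks_divisible_blowup3 \<open>in_m Q\<close> unfolding pullbacks_divisible_def by blast
  have Qh_ev: "eventually (\<lambda>p. Q (blowup3 y0 p) = pz p * Qh p) (nhds 0)"
    using Qh by simp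
  define R3 where "R3 p = R (blowup3 y0 p)" for p
  define D where "D p = 1 + pz p ^ (c + 1) * R3 p" for p
  have "hgerm R3"
    using \<open>hgerm R\<close> unfolding R3_def by (auto intro: hgerm_pullback hgerm_map_blowup)
  then have "hgerm D"
    unfolding D_def by (intro hgerm_intros)
  have "D 0 = 1"
    by (simp add: D_def)
  have D_nz: "eventually (\<lambda>p. D p \<noteq> 0) (nhds 0)"
    using hgerm_eventually_nonzero[OF \<open>hgerm D\<close>] \<open>D 0 = 1\<close> by simp
  have "hgerm_map (half_corner_lift3 c y0 Ph Qh R3)"
    unfolding hgerm_map_def half_corner_lift3_def Let_def D_def[symmetric]
    using \<open>hgerm D\<close> \<open>D 0 = 1\<close> \<open>hgerm Ph\<close> \<open>hgerm Qh\<close> by (auto intro!: hgerm_intros hgerm_divide)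
  moreover have "eventually (\<lambda>p. f (blowup3 y0 p) = csc (pz p) (px p + pz p ^ c * (px p + pz p * Ph p),
      py p + y0 + pz p ^ (c + 1) * Qh p, D p) \<and> D p \<noteq> 0) (nhds 0)"
    using Qh_ev Ph D_nz
      eventually_pullback[OF hgerm_map_blowup(3) blowup_simps(6)[of y0] f]
    by eventually_elim (simp add: half_corner_map_def blowup3_def D_def R3_def csc_def
        power2_eq_square algebra_simps)
  ultimately have "lift_chart3 y0 f (half_corner_lift3 c y0 Ph Qh R3)"
    by (rule lift_chart3I) (simp add: half_corner_lift3_def D_def Let_def)
  then show thesis using that \<open>hgerm Ph\<close> \<open>hgerm Qh\<close> \<open>hgerm R3\<close> by blast
qed

lemma is_half_corner_half_corner_lift3:
  assumes "0 < c" "hgerm Ph" "hgerm Qh" "hgerm R"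
  shows "is_half_corner (half_corner_lift3 c y0 Ph Qh R)"
proof -
  let ?g = "half_corner_lift3 c y0 Ph Qh R"
  define \<alpha> where "\<alpha> = Ph 0"
  let ?\<psi> = "shear 0 (- \<alpha>)"
  define Rs where "Rs p = R (?\<psi> p)" for p
  define D where "D p = 1 + pz p ^ (c + 1) * Rs p" for p
  define \<beta> where "\<beta> = Qh 0 - y0 * R 0"
  define P' where "P' p = inverse (D p) * (pz p * (Ph (?\<psi> p) - \<alpha>) +
      pz p * (Rs p * (- (px p - \<alpha> * pz p) + \<alpha> * pz p * D p - px p * pz p ^ c)))" for p
  define Q' where "Q' p = (Qh (?\<psi> p) - (py p + y0) * Rs p) / D p - \<beta>" for p
  have pull: "hgerm (\<lambda>p. Ph (?\<psi> p))" "hgerm (\<lambda>p. Qh (?\<psi> p))" "hgerm Rs"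
    unfolding Rs_def using assms(2-4) hgerm_pullback[OF _ hgerm_map_shear] by simp_all
  then have "hgerm D"
    unfolding D_def by (intro hgerm_intros)
  have "D 0 = 1" "Ph (?\<psi> 0) = \<alpha>" "Rs 0 = R 0"
    by (simp_all add: D_def \<alpha>_def Rs_def)
  have "in_m Q'"
    unfolding in_m_def Q'_def using pull \<open>hgerm D\<close> \<open>D 0 = 1\<close> \<open>Rs 0 = R 0\<close>
    by (auto intro!: hgerm_intros hgerm_divide simp: \<beta>_def zero_prod_def)
  have "in_m (\<lambda>p. Ph (?\<psi> p) - \<alpha>)" "in_m (\<lambda>p. Rs p * (- (px p - \<alpha> * pz p) + \<alpha> * pz p * D p - px p * pz p ^ c))"
    using pull \<open>hgerm D\<close> \<open>Ph (?\<psi> 0) = \<alpha>\<close> \<open>0 < c\<close> by (auto intro!: in_mI hgerm_intros simp: zero_prod_def)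
  from in_m2_add[OF in_m2_mult[OF in_m_coordinates(3) this(1)] in_m2_mult[OF in_m_coordinates(3) this(2)]]
  have "in_m2 P'"
    unfolding P'_def using hgerm_inverse[OF \<open>hgerm D\<close>] \<open>D 0 = 1\<close> by (intro in_m2_hgerm_mult) simp_all
  have "eventually (\<lambda>p. D p \<noteq> 0) (nhds 0)"
    using hgerm_eventually_nonzero[OF \<open>hgerm D\<close>] \<open>D 0 = 1\<close> by simp
  then have "eventually (\<lambda>p. shear 0 \<alpha> (?g (?\<psi> p)) = half_corner_map c \<beta> P' Q' Rs p) (nhds 0)"
    by (rule eventually_mono)
       (simp add: half_corner_lift3_def half_corner_map_def shear_def Let_def P'_def Q'_def D_def Rs_def
        field_simps)
  then have "half_corner_form c \<beta> P' Q' Rs (\<lambda>p. shear 0 \<alpha> (?g (?\<psi> p)))"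
    using \<open>0 < c\<close> \<open>in_m2 P'\<close> \<open>in_m Q'\<close> \<open>hgerm Rs\<close> by (simp add: half_corner_form_iff)
  moreover have "conj_to ?g (\<lambda>p. shear 0 \<alpha> (?g (?\<psi> p)))"
    by (rule conj_to_coordinate_change[OF loc_biholo_shear[of 0 \<alpha>, simplified]]) (simp add: shear_def)
  ultimately show ?thesis
    unfolding is_half_corner_def by blast
qed

lemma half_corner_lift_chart1_simple_corner:
  assumes "half_corner_form c \<beta> P Q R f"
  shows "\<exists>g. lift_chart1 f g \<and> is_simple_corner g"
proof -
  obtain E Q1 R1 where "in_m E" "hgerm Q1" "hgerm R1" "lift_chart1 f (half_corner_lift1 c \<beta> E Q1 R1)"
    using lift_chart1_half_corner[OF assms] .
  moreover have "0 < c" using assms by (simp add: half_corner_form_iff)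
  ultimately show ?thesis using is_simple_corner_half_corner_lift1 by blast
qed

lemma half_corner_lift_chart2_spinning_corner:
  assumes "half_corner_form c \<beta> P Q R f"
  shows "\<exists>g. lift_chart2 f g \<and> is_spinning_corner g"
proof -
  obtain Ph Q2 R2 where "hgerm Ph" "hgerm Q2" "hgerm R2" "lift_chart2 f (half_corner_lift2 c \<beta> Ph Q2 R2)"
    using lift_chart2_half_corner[OF assms] .
  moreover have "0 < c" using assms by (simp add: half_corner_form_iff)
  ultimately show ?thesis using is_spinning_corner_half_corner_lift2 by blast
qed

lemma half_corner_lift_chart3_half_corner:
  assumes "half_corner_form c 0 P Q R f"
  shows "\<exists>g. lift_chart3 y0 f g \<and> is_half_corner g"
proof -
  obtain Ph Qh R3 where "hgerm Ph" "hgerm Qh" "hgerm R3" "lift_chart3 y0 f (half_corner_lift3 c y0 Ph Qh R3)"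
    using lift_chart3_half_corner[OF assms] .
  moreover have "0 < c" using assms by (simp add: half_corner_form_iff)
  ultimately show ?thesis using is_half_corner_half_corner_lift3 by blast
qed

theorem proposition3p22:
  fixes f :: "c3 \<Rightarrow> c3" and c :: nat and \<beta> :: complex and P Q R :: "c3 \<Rightarrow> complex"
  assumes "half_corner_form c \<beta> P Q R f"
  shows "{v. \<exists>lam. singular_dir f c v lam} =
           cline (1, 0, 0) \<union> cline (0, 1, 0) \<union> {v. \<beta> = 0 \<and> (\<exists>y0. v \<in> cline (0, y0, 1))}
       \<and> exceptional_dir (1, 0, 0) \<and> exceptional_dir (0, 1, 0)
       \<and> (\<beta> = 0 \<longrightarrow> (\<forall>y0. \<not> exceptional_dir (0, y0, 1) \<and> degenerate_dir f c (0, y0, 1)))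
       \<and> (\<exists>g. lift_chart1 f g \<and> is_simple_corner g)
       \<and> (\<exists>g. lift_chart2 f g \<and> is_spinning_corner g)
       \<and> (\<beta> = 0 \<longrightarrow> (\<forall>y0. \<exists>g. lift_chart3 y0 f g \<and> is_half_corner g))"
proof -
  have "exceptional_dir (1, 0, 0)" "exceptional_dir (0, 1, 0)"
    by (simp_all add: exceptional_dir_def zero_prod_def)
  with half_corner_singular_dirs[OF assms] half_corner_lift_chart1_simple_corner[OF assms]
    half_corner_lift_chart2_spinning_corner[OF assms]
  show ?thesis
    using assms half_corner_degenerate_dirs half_corner_lift_chart3_half_corner by blast
qed

end
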